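(* Let $q(x^{(1)},x^{(2)},y^{(1)},y^{(2)})$ be a joint distribution on finite sets such that $X^{(1)}=X^{(2)}$ almost surely, and write $X=X^{(1)}=X^{(2)}$. Let $r\ge1$ and let random variables $F_1,\dots,F_r$ (on finite alphabets) be jointly distributed with $(X,Y^{(1)},Y^{(2)})$ (whose joint law is the one induced by $q$) such that $Y^{(1)}-F_rF_{r-1}\cdots F_1X-Y^{(2)}$. Suppose positive reals $R'_1,\dots,R'_r$ satisfy $\sum_{i=1}^s R'_i> I(Y^{(1)}Y^{(2)};F_1\cdots F_s\mid X)$ for every $1\le s\le r$. Then the rate pair $\big(\sum_{i\text{ odd}}R'_i,\ \sum_{i\text{ even}}R'_i\big)$ is admissible for $q$ with two rounds of communication, i.e. with $r=2$ in the definition of admissibility.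
   Context: Two-node coordination problem. Fix finite alphabets and a joint pmf $q(x^{(1)},x^{(2)},y^{(1)},y^{(2)})$. For a natural number $r$, a code of blocklength $n$ with $r$ interactive rounds is as follows: node 1 observes $X^{(1)}_{1:n}$ and node 2 observes $X^{(2)}_{1:n}$, where $(X^{(1)}_i,X^{(2)}_i)_{i=1}^n$ are i.i.d. with the $(X^{(1)},X^{(2)})$-marginal of $q$; node 1 has private randomness $M_1$ and node 2 private randomness $M_2$, with $M_1$, $M_2$, $(X^{(1)}_{1:n},X^{(2)}_{1:n})$ mutually independent; there is no common randomness. Messages $C_1,\dots,C_r$ are sent, with $H(C_i\mid C_{1:i-1}X^{(1)}_{1:n}M_1)=0$ for odd $i$ and $H(C_i\mid C_{1:i-1}X^{(2)}_{1:n}M_2)=0$ for even $i$, and $\frac1n\sum_{i\text{ odd}}H(C_i)\le R_{12}$, $\frac1n\sum_{i\text{ even}}H(C_i)\le R_{21}$. Afterwards node 1 produces $\widehat Y^{(1)}_{1:n}$ as a function of $(X^{(1)}_{1:n},M_1,C_{1:r})$ and node 2 produces $\widehat Y^{(2)}_{1:n}$ as a function of $(X^{(2)}_{1:n},M_2,C_{1:r})$. The pair $(R_{12},R_{21})$ is admissible for $q$ with $r$ rounds if for every $\epsilon>0$ there is $n_0$ such that for all $n\ge n_0$ such a code exists for which the total variation ($\ell_1$) distance between the law of $(X^{(1)}_{1:n},X^{(2)}_{1:n},\widehat Y^{(1)}_{1:n},\widehat Y^{(2)}_{1:n})$ and the law of $n$ i.i.d. copies of $(X^{(1)},X^{(2)},Y^{(1)},Y^{(2)})\sim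 q$ is at most $\epsilon$. The notation $A-B-C$ means $A$ and $C$ are conditionally independent given $B$; juxtaposition denotes joint random variables. *)

theory Defs
  imports "HOL-Probability.Probability"
begin

primrec iid_pmf :: "nat \<Rightarrow> 'a pmf \<Rightarrow> 'a list pmf" where
  "iid_pmf 0 p = return_pmf []"
| "iid_pmf (Suc n) p = bind_pmf p (\<lambda>x. map_pmf (\<lambda>xs. x # xs) (iid_pmf n p))"

definition entropy_pmf :: "'a pmf \<Rightarrow> ennreal" where
  "entropy_pmf p = (\<integral>\<^sup>+ x. ennreal (if pmf p x = 0 then 0 else - pmf p x * log 2 (pmf p x)) \<partial>count_space UNIV)"

definition tv_dist :: "'a pmf \<Rightarrow> 'a pmf \<Rightarrow> ennreal" where
  "tv_dist p p' = (\<integral>\<^sup>+ x. ennreal \<bar>pmf p x - pmf p' x\<bar> \<partial>count_space UNIV)"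

definition markov_chain :: "'w pmf \<Rightarrow> ('w \<Rightarrow> 'a) \<Rightarrow> ('w \<Rightarrow> 'b) \<Rightarrow> ('w \<Rightarrow> 'c) \<Rightarrow> bool" where
  "markov_chain P fa fb fc \<longleftrightarrow> (\<forall>a b c.
     measure_pmf.prob P {w. fa w = a \<and> fb w = b \<and> fc w = c} * measure_pmf.prob P {w. fb w = b}
   = measure_pmf.prob P {w. fa w = a \<and> fb w = b} * measure_pmf.prob P {w. fb w = b \<and> fc w = c})"

definition cond_mutual_info :: "'w pmf \<Rightarrow> ('w \<Rightarrow> 'a) \<Rightarrow> ('w \<Rightarrow> 'b) \<Rightarrow> ('w \<Rightarrow> 'c) \<Rightarrow> real" where
  "cond_mutual_info P fa fb fc =
    (\<Sum>(a,b,c)\<in>set_pmf (map_pmf (\<lambda>w. (fa w, fb w, fc w)) P).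
       pmf (map_pmf (\<lambda>w. (fa w, fb w, fc w)) P) (a,b,c) *
       log 2 (pmf (map_pmf (\<lambda>w. (fa w, fb w, fc w)) P) (a,b,c) * pmf (map_pmf fc P) c
              / (pmf (map_pmf (\<lambda>w. (fa w, fc w)) P) (a,c) * pmf (map_pmf (\<lambda>w. (fb w, fc w)) P) (b,c))))"

text \<open>Odd-numbered messages are
  computed by node 1 from (its source sequence, its private randomness, previous
  messages); even-numbered ones by node 2 likewise.\<close>
primrec messages ::
  "(nat \<Rightarrow> 'x1 list \<Rightarrow> nat \<Rightarrow> nat list \<Rightarrow> nat) \<Rightarrow> (nat \<Rightarrow> 'x2 list \<Rightarrow> nat \<Rightarrow> nat list \<Rightarrow> nat) \<Rightarrow>
   'x1 list \<Rightarrow> 'x2 list \<Rightarrow> nat \<Rightarrow> nat \<Rightarrow> nat \<Rightarrow> nat list" where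
  "messages e1 e2 xs1 xs2 m1 m2 0 = []"
| "messages e1 e2 xs1 xs2 m1 m2 (Suc k) =
     (let prev = messages e1 e2 xs1 xs2 m1 m2 k in
      prev @ [if odd (Suc k) then e1 (Suc k) xs1 m1 prev else e2 (Suc k) xs2 m2 prev])"

text \<open>Joint law of the source block and the two (independent) private randomness variables.\<close>
definition code_space :: "nat \<Rightarrow> ('x1 \<times> 'x2 \<times> 'y1 \<times> 'y2) pmf \<Rightarrow> nat pmf \<Rightarrow> nat pmf
    \<Rightarrow> (('x1 \<times> 'x2) list \<times> nat \<times> nat) pmf" where
  "code_space n q P1 P2 =
     bind_pmf (iid_pmf n (map_pmf (\<lambda>(a,b,c,d). (a,b)) q)) (\<lambda>xs.
     bind_pmf P1 (\<lambda>m1. bind_pmf P2 (\<lambda>m2. return_pmf (xs, m1, m2))))"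

definition admissible :: "nat \<Rightarrow> ('x1 \<times> 'x2 \<times> 'y1 \<times> 'y2) pmf \<Rightarrow> real \<Rightarrow> real \<Rightarrow> bool" where
  "admissible r q R12 R21 \<longleftrightarrow>
    (\<forall>\<epsilon>>0. \<exists>n0. \<forall>n\<ge>n0. \<exists>(P1::nat pmf) (P2::nat pmf)
        (e1::nat \<Rightarrow> 'x1 list \<Rightarrow> nat \<Rightarrow> nat list \<Rightarrow> nat) (e2::nat \<Rightarrow> 'x2 list \<Rightarrow> nat \<Rightarrow> nat list \<Rightarrow> nat)
        (d1::'x1 list \<Rightarrow> nat \<Rightarrow> nat list \<Rightarrow> 'y1 list) (d2::'x2 list \<Rightarrow> nat \<Rightarrow> nat list \<Rightarrow> 'y2 list).
      let J = code_space n q P1 P2;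
          C = (\<lambda>(xs, m1, m2). messages e1 e2 (map fst xs) (map snd xs) m1 m2 r);
          msg_law = (\<lambda>i. map_pmf (\<lambda>w. C w ! (i - 1)) J)
      in (\<Sum>i\<in>{i\<in>{1..r}. odd i}. entropy_pmf (msg_law i)) \<le> ennreal (real n * R12)
       \<and> (\<Sum>i\<in>{i\<in>{1..r}. even i}. entropy_pmf (msg_law i)) \<le> ennreal (real n * R21)
       \<and> tv_dist
           (map_pmf (\<lambda>(xs, m1, m2). (map fst xs, map snd xs,
                  d1 (map fst xs) m1 (C (xs, m1, m2)), d2 (map snd xs) m2 (C (xs, m1, m2)))) J)
           (map_pmf (\<lambda>zs. (map (\<lambda>(a,b,c,d). a) zs, map (\<lambda>(a,b,c,d). b) zs,
                            map (\<lambda>(a,b,c,d). c) zs, map (\<lambda>(a,b,c,d). d) zs)) (iid_pmf n q))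
         \<le> ennreal \<epsilon>)"

end

theory Submission
  imports Defs
begin

text \<open>Both nodes observe the same source X, so they can share codebooks that depend on the
  whole source block. Node 1 sends a uniform index below about 2^(n R12), node 2 one below
  about 2^(n R21); the pair of indices selects a codeword for F from a codebook drawn i.i.d.\
  from the conditional law of F given X. By the Markov chain the conditional law of (Y1, Y2)
  given (F, X) is a product, so each node synthesizes its own output from its private
  randomness. Soft covering makes the resulting joint law close to the target as soon as
  R12 + R21 exceeds I(Y1 Y2; F | X).\<close>

section \<open>Products of pmfs\<close>

primrec Pi_list_pmf :: "'a pmf list \<Rightarrow> 'a list pmf" where
  "Pi_list_pmf [] = return_pmf []"
| "Pi_list_pmf (p # ps) = bind_pmf p (\<lambda>x. map_pmf (\<lambda>xs. x # xs) (Pi_list_pmf ps))"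

lemma iid_pmf_eq_Pi_list_pmf: "iid_pmf n p = Pi_list_pmf (replicate n p)"
  by (induction n) auto

lemma Pi_list_pmf_Cons_eq_pair_pmf:
  "Pi_list_pmf (p # ps) = map_pmf (\<lambda>(x, xs). x # xs) (pair_pmf p (Pi_list_pmf ps))"
  by (simp add: pair_pmf_def map_pmf_def bind_assoc_pmf bind_return_pmf)

lemma pmf_Pi_list_pmf:
  "pmf (Pi_list_pmf ps) xs = (if length xs = length ps then prod_list (map2 pmf ps xs) else 0)"
proof (induction ps arbitrary: xs)
  case Nil
  then show ?case by (cases xs) (auto simp: pmf_return)
next
  case (Cons p ps)
  show ?case
  proof (cases xs)
    case Nil
    then show ?thesis by (auto simp: pmf_eq_0_set_pmf)
  next
    case (Cons y ys)
    have "inj (\<lambda>(x::'a, xs). x # xs)" by (auto simp: inj_def)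
    then have "pmf (Pi_list_pmf (p # ps)) (y # ys) = pmf (pair_pmf p (Pi_list_pmf ps)) (y, ys)"
      unfolding Pi_list_pmf_Cons_eq_pair_pmf using pmf_map_inj' by fastforce
    then show ?thesis using Cons.IH[of ys] Cons by (simp add: pmf_pair)
  qed
qed

lemma set_Pi_list_pmf:
  "set_pmf (Pi_list_pmf ps) = {xs. list_all2 (\<lambda>p x. x \<in> set_pmf p) ps xs}"
  by (induction ps) (auto simp: list_all2_Cons1)

lemma length_of_set_Pi_list_pmf: "xs \<in> set_pmf (Pi_list_pmf ps) \<Longrightarrow> length xs = length ps"
  by (auto simp: set_Pi_list_pmf list_all2_lengthD)

lemma nth_of_set_Pi_list_pmf:
  "xs \<in> set_pmf (Pi_list_pmf ps) \<Longrightarrow> i < length ps \<Longrightarrow> xs ! i \<in> set_pmf (ps ! i)"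
  by (auto simp: set_Pi_list_pmf list_all2_conv_all_nth)

lemma finite_set_Pi_list_pmf:
  "(\<And>p. p \<in> set ps \<Longrightarrow> finite (set_pmf p)) \<Longrightarrow> finite (set_pmf (Pi_list_pmf ps))"
proof (induction ps)
  case (Cons p ps)
  have "set_pmf (Pi_list_pmf (p # ps)) = (\<lambda>(x, xs). x # xs) ` (set_pmf p \<times> set_pmf (Pi_list_pmf ps))"
    unfolding Pi_list_pmf_Cons_eq_pair_pmf by auto
  then show ?case using Cons by simp
qed simp

lemma Pi_list_pmf_map: "Pi_list_pmf (map (map_pmf f) ps) = map_pmf (map f) (Pi_list_pmf ps)"
  by (induction ps) (auto simp: map_bind_pmf bind_map_pmf pmf.map_comp o_def)

lemma Pi_list_pmf_bind:
  "Pi_list_pmf (map (\<lambda>x. bind_pmf (A x) (B x)) xs) =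
   bind_pmf (Pi_list_pmf (map A xs)) (\<lambda>fs. Pi_list_pmf (map2 B xs fs))"
proof (induction xs)
  case (Cons x xs)
  show ?case
    apply (simp add: Cons.IH bind_assoc_pmf bind_map_pmf map_bind_pmf bind_return_pmf)
    apply (subst bind_commute_pmf[of "Pi_list_pmf _"])
    apply (simp add: bind_assoc_pmf bind_map_pmf map_bind_pmf bind_return_pmf)
    done
qed (simp add: bind_return_pmf)

lemma Pi_list_pmf_map2_map_pmf:
  "length xs = length fs \<Longrightarrow>
   Pi_list_pmf (map2 (\<lambda>x f. map_pmf (h x f) (W x f)) xs fs) =
   map_pmf (\<lambda>ws. map2 (\<lambda>(x, f) w. h x f w) (zip xs fs) ws) (Pi_list_pmf (map2 W xs fs))"
proof (induction xs arbitrary: fs)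
  case (Cons x xs)
  then obtain f fs' where "fs = f # fs'" by (cases fs) auto
  with Cons show ?case by (simp add: map_bind_pmf bind_map_pmf pmf.map_comp o_def)
qed simp

lemma Pi_list_pmf_pair_pmf:
  "map_pmf (\<lambda>ws. (map fst ws, map snd ws)) (Pi_list_pmf (map2 (\<lambda>x f. pair_pmf (A x f) (B x f)) xs fs))
    = pair_pmf (Pi_list_pmf (map2 A xs fs)) (Pi_list_pmf (map2 B xs fs))"
proof (induction xs arbitrary: fs)
  case (Cons x xs)
  show ?case
  proof (cases fs)
    case (Cons f fs')
    have "map_pmf (\<lambda>ws. (map fst ws, map snd ws)) (Pi_list_pmf (map2 (\<lambda>x f. pair_pmf (A x f) (B x f)) (x # xs) fs))
      = bind_pmf (pair_pmf (A x f) (B x f)) (\<lambda>ab. map_pmf (\<lambda>(u, v). (fst ab # u, snd ab # v))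
          (pair_pmf (Pi_list_pmf (map2 A xs fs')) (Pi_list_pmf (map2 B xs fs'))))"
      by (simp add: Cons Cons.IH[symmetric] map_bind_pmf pmf.map_comp o_def)
    also have "\<dots> = pair_pmf (Pi_list_pmf (map2 A (x # xs) fs)) (Pi_list_pmf (map2 B (x # xs) fs))"
      unfolding pair_pmf_def Cons
      apply (simp add: bind_assoc_pmf bind_return_pmf map_bind_pmf bind_map_pmf map_pmf_def)
      apply (subst bind_commute_pmf[of "B x f"])
      apply (simp add: bind_assoc_pmf bind_return_pmf)
      done
    finally show ?thesis .
  qed (simp add: pair_return_pmf1)
qed (simp add: pair_return_pmf1)

lemma Pi_list_pmf_map_Pair:
  "Pi_list_pmf (map (\<lambda>x. map_pmf (Pair x) (Q x)) xs) = map_pmf (zip xs) (Pi_list_pmf (map Q xs))"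
  by (induction xs) (auto simp: map_bind_pmf bind_map_pmf pmf.map_comp o_def)

lemma iid_pmf_map: "iid_pmf n (map_pmf f p) = map_pmf (map f) (iid_pmf n p)"
  by (simp add: iid_pmf_eq_Pi_list_pmf Pi_list_pmf_map[symmetric])

lemma iid_pmf_bind:
  "iid_pmf n (bind_pmf p C) = bind_pmf (iid_pmf n p) (\<lambda>xs. Pi_list_pmf (map C xs))"
proof -
  have "iid_pmf n (bind_pmf p C) = Pi_list_pmf (map (\<lambda>_. bind_pmf p C) (replicate n ()))"
    by (simp add: iid_pmf_eq_Pi_list_pmf map_replicate_const)
  also have "\<dots> = bind_pmf (Pi_list_pmf (map (\<lambda>_. p) (replicate n ())))
      (\<lambda>fs. Pi_list_pmf (map2 (\<lambda>_. C) (replicate n ()) fs))"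
    by (rule Pi_list_pmf_bind)
  also have "\<dots> = bind_pmf (iid_pmf n p) (\<lambda>fs. Pi_list_pmf (map2 (\<lambda>_. C) (replicate n ()) fs))"
    by (simp add: iid_pmf_eq_Pi_list_pmf map_replicate_const)
  also have "\<dots> = bind_pmf (iid_pmf n p) (\<lambda>xs. Pi_list_pmf (map C xs))"
  proof (rule bind_pmf_cong[OF refl])
    fix fs assume "fs \<in> set_pmf (iid_pmf n p)"
    then have "length fs = n" by (simp add: iid_pmf_eq_Pi_list_pmf length_of_set_Pi_list_pmf)
    then show "Pi_list_pmf (map2 (\<lambda>_. C) (replicate n ()) fs) = Pi_list_pmf (map C fs)"
      by (induction fs arbitrary: n) (auto simp: Suc_length_conv)
  qed
  finally show ?thesis .
qed

lemma length_of_set_iid_pmf: "xs \<in> set_pmf (iid_pmf n p) \<Longrightarrow> length xs = n"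
  by (simp add: iid_pmf_eq_Pi_list_pmf length_of_set_Pi_list_pmf)

lemma set_of_set_iid_pmf: "xs \<in> set_pmf (iid_pmf n p) \<Longrightarrow> x \<in> set xs \<Longrightarrow> x \<in> set_pmf p"
  by (auto simp: iid_pmf_eq_Pi_list_pmf set_Pi_list_pmf list_all2_conv_all_nth in_set_conv_nth)

lemma finite_set_iid_pmf: "finite (set_pmf p) \<Longrightarrow> finite (set_pmf (iid_pmf n p))"
  by (induction n) auto

lemma finite_set_pmf_bounded_lists:
  fixes M :: "('a::finite list \<times> 'b::finite list) pmf"
  assumes "\<And>xs ws. (xs, ws) \<in> set_pmf M \<Longrightarrow> length xs \<le> n \<and> length ws \<le> n"
  shows "finite (set_pmf M)"
proof (rule finite_subset)
  show "set_pmf M \<subseteq> {xs. set xs \<subseteq> UNIV \<and> length xs \<le> n} \<times> {ws. set ws \<subseteq> UNIV \<and> length ws \<le> n}"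
    using assms by auto
qed (intro finite_cartesian_product finite_lists_length_le; simp)

definition memoryless_channel :: "('x \<Rightarrow> 'v \<Rightarrow> 'w pmf) \<Rightarrow> 'x list \<Rightarrow> 'v list \<Rightarrow> 'w list pmf" where
  "memoryless_channel W xs fs = Pi_list_pmf (map2 W xs fs)"

definition joint_pmf :: "'x pmf \<Rightarrow> ('x \<Rightarrow> 'v pmf) \<Rightarrow> ('x \<Rightarrow> 'v \<Rightarrow> 'w pmf) \<Rightarrow> ('x \<times> 'v \<times> 'w) pmf" where
  "joint_pmf px \<kappa> W = bind_pmf px (\<lambda>x. bind_pmf (\<kappa> x) (\<lambda>f. map_pmf (\<lambda>w. (x, f, w)) (W x f)))"

lemma bind_memoryless_channel:
  "bind_pmf (Pi_list_pmf (map \<kappa> xs)) (memoryless_channel W xs) = Pi_list_pmf (map (\<lambda>x. bind_pmf (\<kappa> x) (W x)) xs)"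
  unfolding Pi_list_pmf_bind memoryless_channel_def ..

lemma length_of_set_memoryless_channel:
  "ws \<in> set_pmf (memoryless_channel W xs fs) \<Longrightarrow> length ws = min (length xs) (length fs)"
  unfolding memoryless_channel_def by (auto dest: length_of_set_Pi_list_pmf)

lemma finite_set_memoryless_channel:
  "(\<And>x f. finite (set_pmf (W x f))) \<Longrightarrow> finite (set_pmf (memoryless_channel W xs fs))"
  unfolding memoryless_channel_def by (rule finite_set_Pi_list_pmf) auto

lemma map_fst_joint_pmf: "map_pmf fst (joint_pmf px \<kappa> W) = px"
  by (simp add: joint_pmf_def map_bind_pmf pmf.map_comp o_def map_pmf_const bind_return_pmf')

lemma iid_joint_pmf:
  "iid_pmf n (joint_pmf px \<kappa> W) = bind_pmf (iid_pmf n px) (\<lambda>xs. bind_pmf (Pi_list_pmf (map \<kappa> xs))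
      (\<lambda>fs. map_pmf (\<lambda>ws. zip xs (zip fs ws)) (memoryless_channel W xs fs)))"
proof -
  have zip3: "map2 (\<lambda>(x, f) w. (x, f, w)) (zip xs fs) ws = zip xs (zip fs ws)" for xs fs ws :: "_ list"
    by (induction xs arbitrary: fs ws) (auto simp: zip_Cons1 split: list.splits)
  have "Pi_list_pmf (map (\<lambda>x. bind_pmf (\<kappa> x) (\<lambda>f. map_pmf (\<lambda>w. (x, f, w)) (W x f))) xs)
      = bind_pmf (Pi_list_pmf (map \<kappa> xs)) (\<lambda>fs. map_pmf (\<lambda>ws. zip xs (zip fs ws)) (memoryless_channel W xs fs))"
    for xs
    unfolding Pi_list_pmf_bind
  proof (rule bind_pmf_cong[OF refl])
    fix fs assume "fs \<in> set_pmf (Pi_list_pmf (map \<kappa> xs))"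
    then have "length xs = length fs" by (simp add: length_of_set_Pi_list_pmf)
    then show "Pi_list_pmf (map2 (\<lambda>x f. map_pmf (\<lambda>w. (x, f, w)) (W x f)) xs fs)
        = map_pmf (\<lambda>ws. zip xs (zip fs ws)) (memoryless_channel W xs fs)"
      by (simp add: Pi_list_pmf_map2_map_pmf memoryless_channel_def zip3)
  qed
  then show ?thesis
    unfolding joint_pmf_def iid_pmf_bind by simp
qed

section \<open>Expectations and concentration\<close>

lemma expectation_bind_pmf_finite:
  fixes f :: "'b \<Rightarrow> real"
  assumes M: "finite (set_pmf M)" and N: "\<And>x. x \<in> set_pmf M \<Longrightarrow> finite (set_pmf (N x))"
  shows "measure_pmf.expectation (bind_pmf M N) f = measure_pmf.expectation M (\<lambda>x. measure_pmf.expectation (N x) f)"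
proof -
  define A where "A = (\<Union>x\<in>set_pmf M. set_pmf (N x))"
  have A: "finite A" using M N by (auto simp: A_def)
  have expectation_N: "measure_pmf.expectation (N x) f = (\<Sum>y\<in>A. pmf (N x) y * f y)" if "x \<in> set_pmf M" for x
    using that by (subst integral_measure_pmf[OF A]) (auto simp: A_def)
  have "measure_pmf.expectation (bind_pmf M N) f = (\<Sum>y\<in>A. pmf (bind_pmf M N) y * f y)"
    by (subst integral_measure_pmf[OF A]) (auto simp: A_def)
  also have "\<dots> = (\<Sum>y\<in>A. \<Sum>x\<in>set_pmf M. pmf M x * (pmf (N x) y * f y))"
    unfolding pmf_bind by (subst integral_measure_pmf[OF M]) (auto simp: sum_distrib_right mult.assoc)
  also have "\<dots> = (\<Sum>x\<in>set_pmf M. pmf M x * measure_pmf.expectation (N x) f)"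
    by (subst sum.swap) (simp add: sum_distrib_left expectation_N)
  also have "\<dots> = measure_pmf.expectation M (\<lambda>x. measure_pmf.expectation (N x) f)"
    by (subst integral_measure_pmf[OF M]) auto
  finally show ?thesis .
qed

lemma prob_bind_pmf_finite:
  assumes "finite (set_pmf M)" and "\<And>x. x \<in> set_pmf M \<Longrightarrow> finite (set_pmf (N x))"
  shows "measure_pmf.prob (bind_pmf M N) A = measure_pmf.expectation M (\<lambda>x. measure_pmf.prob (N x) A)"
  using expectation_bind_pmf_finite[OF assms, where f="indicator A"] by simp

lemma expectation_iid_pmf_Suc:
  fixes f :: "'a list \<Rightarrow> real"
  assumes "finite (set_pmf p)"
  shows "measure_pmf.expectation (iid_pmf (Suc n) p) f =
    measure_pmf.expectation p (\<lambda>x. measure_pmf.expectation (iid_pmf n p) (\<lambda>xs. f (x # xs)))"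
  using assms by (simp add: expectation_bind_pmf_finite finite_set_iid_pmf)

lemma expectation_iid_sum_list:
  fixes g :: "'a \<Rightarrow> real"
  assumes fin: "finite (set_pmf p)"
  shows "measure_pmf.expectation (iid_pmf n p) (\<lambda>zs. \<Sum>z\<leftarrow>zs. g z) = n * measure_pmf.expectation p g"
proof (induction n)
  case (Suc n)
  have "measure_pmf.expectation (iid_pmf (Suc n) p) (\<lambda>zs. \<Sum>z\<leftarrow>zs. g z)
     = measure_pmf.expectation p (\<lambda>x. g x + n * measure_pmf.expectation p g)"
    unfolding expectation_iid_pmf_Suc[OF fin] using Suc fin finite_set_iid_pmf[OF fin, of n]
    by (simp add: Bochner_Integration.integral_add integrable_measure_pmf_finite)
  also have "\<dots> = Suc n * measure_pmf.expectation p g"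
    using fin by (simp add: Bochner_Integration.integral_add integrable_measure_pmf_finite algebra_simps)
  finally show ?case .
qed simp

lemma variance_iid_sum_list:
  fixes g :: "'a \<Rightarrow> real"
  assumes fin: "finite (set_pmf p)"
  defines "m \<equiv> measure_pmf.expectation p g"
  shows "measure_pmf.expectation (iid_pmf n p) (\<lambda>zs. ((\<Sum>z\<leftarrow>zs. g z) - n * m)\<^sup>2)
         = n * measure_pmf.expectation p (\<lambda>z. (g z - m)\<^sup>2)"
proof (induction n)
  case (Suc n)
  let ?E = "measure_pmf.expectation (iid_pmf n p)"
  let ?V = "measure_pmf.expectation p (\<lambda>z. (g z - m)\<^sup>2)"
  have fin_n: "finite (set_pmf (iid_pmf n p))" using finite_set_iid_pmf[OF fin] .
  have centered: "?E (\<lambda>zs. (\<Sum>z\<leftarrow>zs. g z) - n * m) = 0"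
    using expectation_iid_sum_list[OF fin, of n g] fin_n
    by (simp add: Bochner_Integration.integral_diff integrable_measure_pmf_finite m_def)
  have "?E (\<lambda>xs. ((\<Sum>z\<leftarrow>x # xs. g z) - Suc n * m)\<^sup>2) = (g x - m)\<^sup>2 + n * ?V" for x
  proof -
    have "((\<Sum>z\<leftarrow>x # xs. g z) - Suc n * m)\<^sup>2 =
        (g x - m)\<^sup>2 + 2 * (g x - m) * ((\<Sum>z\<leftarrow>xs. g z) - n * m) + ((\<Sum>z\<leftarrow>xs. g z) - n * m)\<^sup>2" for xs
      by (simp add: power2_eq_square algebra_simps)
    then show ?thesis
      using fin_n centered Suc by (simp add: Bochner_Integration.integral_add integrable_measure_pmf_finite)
  qed
  then show ?case
    unfolding expectation_iid_pmf_Suc[OF fin] using fin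
    by (simp add: Bochner_Integration.integral_add integrable_measure_pmf_finite algebra_simps)
qed simp

lemma prob_ge_le_second_moment:
  fixes Z :: "'a \<Rightarrow> real"
  assumes fin: "finite (set_pmf M)" and c: "c > 0"
  shows "measure_pmf.prob M {x. Z x \<ge> c} \<le> measure_pmf.expectation M (\<lambda>x. (Z x)\<^sup>2) / c\<^sup>2"
proof -
  have "indicator {x. c \<le> Z x} x \<le> (Z x)\<^sup>2 / c\<^sup>2" for x :: 'a
  proof (cases "c \<le> Z x")
    case True
    then have "c\<^sup>2 \<le> (Z x)\<^sup>2" using c by (intro power_mono) auto
    then show ?thesis using True c by simp
  qed simp
  then have "measure_pmf.expectation M (indicator {x. Z x \<ge> c}) \<le> measure_pmf.expectation M (\<lambda>x. (Z x)\<^sup>2 / c\<^sup>2)"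
    using fin by (intro integral_mono) (auto simp: integrable_measure_pmf_finite)
  then show ?thesis by simp
qed

lemma prob_iid_sum_list_ge:
  fixes g :: "'a \<Rightarrow> real"
  assumes fin: "finite (set_pmf p)" and d: "d > 0" and n: "n > 0"
  defines "m \<equiv> measure_pmf.expectation p g"
  shows "measure_pmf.prob (iid_pmf n p) {zs. (\<Sum>z\<leftarrow>zs. g z) \<ge> n * (m + d)}
     \<le> measure_pmf.expectation p (\<lambda>z. (g z - m)\<^sup>2) / (n * d\<^sup>2)"
proof -
  have "measure_pmf.prob (iid_pmf n p) {zs. (\<Sum>z\<leftarrow>zs. g z) \<ge> n * (m + d)}
     = measure_pmf.prob (iid_pmf n p) {zs. (\<Sum>z\<leftarrow>zs. g z) - n * m \<ge> n * d}"
    by (simp add: algebra_simps)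
  also have "\<dots> \<le> measure_pmf.expectation (iid_pmf n p) (\<lambda>zs. ((\<Sum>z\<leftarrow>zs. g z) - n * m)\<^sup>2) / (n * d)\<^sup>2"
    using prob_ge_le_second_moment[OF finite_set_iid_pmf[OF fin], of "n * d"] d n by simp
  also have "\<dots> = measure_pmf.expectation p (\<lambda>z. (g z - m)\<^sup>2) / (n * d\<^sup>2)"
    unfolding variance_iid_sum_list[OF fin, of n g, folded m_def] using n d
    by (simp add: power2_eq_square)
  finally show ?thesis .
qed

lemma expectation_abs_le_sqrt_second_moment:
  fixes X :: "'a \<Rightarrow> real"
  assumes fin: "finite (set_pmf M)"
  shows "measure_pmf.expectation M (\<lambda>x. \<bar>X x\<bar>) \<le> sqrt (measure_pmf.expectation M (\<lambda>x. (X x)\<^sup>2))"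
proof -
  let ?c = "measure_pmf.expectation M (\<lambda>x. \<bar>X x\<bar>)"
  have "(\<bar>X x\<bar> - ?c)\<^sup>2 = (X x)\<^sup>2 - 2 * ?c * \<bar>X x\<bar> + ?c\<^sup>2" for x
    by (simp add: power2_eq_square algebra_simps)
  then have "measure_pmf.expectation M (\<lambda>x. (\<bar>X x\<bar> - ?c)\<^sup>2) = measure_pmf.expectation M (\<lambda>x. (X x)\<^sup>2) - ?c\<^sup>2"
    using fin by (simp add: Bochner_Integration.integral_add Bochner_Integration.integral_diff
        integrable_measure_pmf_finite power2_eq_square)
  moreover have "0 \<le> measure_pmf.expectation M (\<lambda>x. (\<bar>X x\<bar> - ?c)\<^sup>2)" by simp
  ultimately show ?thesis using real_le_rsqrt by simp
qed

lemma exists_in_set_pmf_le_expectation: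
  fixes f :: "'a \<Rightarrow> real"
  assumes fin: "finite (set_pmf M)" and le: "measure_pmf.expectation M f \<le> c"
  shows "\<exists>x\<in>set_pmf M. f x \<le> c"
proof (rule ccontr)
  assume "\<not> ?thesis"
  then have "\<forall>x\<in>set_pmf M. pmf M x * c < pmf M x * f x"
    by (auto simp: pmf_positive)
  then have "(\<Sum>x\<in>set_pmf M. pmf M x * c) < (\<Sum>x\<in>set_pmf M. pmf M x * f x)"
    using fin set_pmf_not_empty by (intro sum_strict_mono) auto
  also have "\<dots> = measure_pmf.expectation M f"
    by (subst integral_measure_pmf[OF fin]) auto
  finally show False
    using le sum_pmf_eq_1[OF fin order_refl] by (simp add: sum_distrib_right[symmetric])
qed

lemma sum_sqrt_mult_le_1:
  fixes x y :: "'b \<Rightarrow> real"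
  assumes "\<And>b. b \<in> B \<Longrightarrow> 0 \<le> x b" "\<And>b. b \<in> B \<Longrightarrow> 0 \<le> y b" "sum x B \<le> 1" "sum y B \<le> 1"
  shows "(\<Sum>b\<in>B. sqrt (x b * y b)) \<le> 1"
proof -
  have "(\<Sum>b\<in>B. sqrt (x b) * sqrt (y b))\<^sup>2 \<le> (\<Sum>b\<in>B. (sqrt (x b))\<^sup>2) * (\<Sum>b\<in>B. (sqrt (y b))\<^sup>2)"
    by (rule Cauchy_Schwarz_ineq_sum)
  also have "\<dots> = sum x B * sum y B" using assms(1,2) by simp
  also have "\<dots> \<le> 1" using assms by (simp add: mult_le_one sum_nonneg)
  finally have "\<bar>\<Sum>b\<in>B. sqrt (x b) * sqrt (y b)\<bar> \<le> 1" by (simp only: abs_square_le_1)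
  then show ?thesis by (simp add: real_sqrt_mult)
qed

lemma variance_le_bound_mult_expectation:
  fixes T :: "'a \<Rightarrow> real"
  assumes fin: "finite (set_pmf \<mu>)" and "\<And>a. 0 \<le> T a" and "\<And>a. T a \<le> c"
  shows "measure_pmf.expectation \<mu> (\<lambda>z. (T z - measure_pmf.expectation \<mu> T)\<^sup>2) \<le> c * measure_pmf.expectation \<mu> T"
proof -
  let ?e = "measure_pmf.expectation \<mu>"
  have "(T z - ?e T)\<^sup>2 = (T z)\<^sup>2 - 2 * ?e T * T z + (?e T)\<^sup>2" for z
    by (simp add: power2_eq_square algebra_simps)
  then have "?e (\<lambda>z. (T z - ?e T)\<^sup>2) = ?e (\<lambda>z. (T z)\<^sup>2) - (?e T)\<^sup>2"
    using fin by (simp add: Bochner_Integration.integral_add Bochner_Integration.integral_diff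
        integrable_measure_pmf_finite power2_eq_square)
  also have "\<dots> \<le> ?e (\<lambda>z. (T z)\<^sup>2)" by simp
  also have "\<dots> \<le> ?e (\<lambda>z. c * T z)"
    using fin assms(2,3)
    by (intro integral_mono) (auto simp: integrable_measure_pmf_finite power2_eq_square mult_right_mono)
  finally show ?thesis by simp
qed

lemma expectation_empirical_mean_deviation:
  fixes T U :: "'a \<Rightarrow> real"
  assumes fin: "finite (set_pmf \<mu>)" and K: "K > 0"
    and T: "\<And>a. 0 \<le> T a" "\<And>a. T a \<le> c" and U: "\<And>a. 0 \<le> U a"
  shows "measure_pmf.expectation (iid_pmf K \<mu>)
      (\<lambda>cb. \<bar>(\<Sum>z\<leftarrow>cb. T z + U z) / K - (measure_pmf.expectation \<mu> T + measure_pmf.expectation \<mu> U)\<bar>)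
    \<le> sqrt (c * measure_pmf.expectation \<mu> T / K) + 2 * measure_pmf.expectation \<mu> U"
proof -
  let ?E = "measure_pmf.expectation (iid_pmf K \<mu>)"
  let ?e = "measure_pmf.expectation \<mu>"
  have fin_K: "finite (set_pmf (iid_pmf K \<mu>))" using finite_set_iid_pmf[OF fin] .
  have "\<bar>(\<Sum>z\<leftarrow>cb. T z + U z) / K - (?e T + ?e U)\<bar>
      \<le> \<bar>(\<Sum>z\<leftarrow>cb. T z) / K - ?e T\<bar> + (\<Sum>z\<leftarrow>cb. U z) / K + ?e U" for cb
  proof -
    have "0 \<le> (\<Sum>z\<leftarrow>cb. U z) / K" using U by (intro divide_nonneg_nonneg sum_list_nonneg) auto
    moreover have "0 \<le> ?e U" using U by simp
    moreover have "(\<Sum>z\<leftarrow>cb. T z + U z) / K - (?e T + ?e U)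
       = ((\<Sum>z\<leftarrow>cb. T z) / K - ?e T) + (\<Sum>z\<leftarrow>cb. U z) / K - ?e U"
      by (simp add: sum_list_addf add_divide_distrib)
    ultimately show ?thesis by linarith
  qed
  then have "?E (\<lambda>cb. \<bar>(\<Sum>z\<leftarrow>cb. T z + U z) / K - (?e T + ?e U)\<bar>)
      \<le> ?E (\<lambda>cb. \<bar>(\<Sum>z\<leftarrow>cb. T z) / K - ?e T\<bar> + (\<Sum>z\<leftarrow>cb. U z) / K + ?e U)"
    using fin_K by (intro integral_mono) (auto simp: integrable_measure_pmf_finite)
  also have "\<dots> = ?E (\<lambda>cb. \<bar>(\<Sum>z\<leftarrow>cb. T z) / K - ?e T\<bar>) + 2 * ?e U"
    using fin_K expectation_iid_sum_list[OF fin, of K U] K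
    by (simp add: Bochner_Integration.integral_add integrable_measure_pmf_finite)
  also have "?E (\<lambda>cb. \<bar>(\<Sum>z\<leftarrow>cb. T z) / K - ?e T\<bar>) \<le> sqrt (?E (\<lambda>cb. ((\<Sum>z\<leftarrow>cb. T z) / K - ?e T)\<^sup>2))"
    by (rule expectation_abs_le_sqrt_second_moment[OF fin_K])
  also have "?E (\<lambda>cb. ((\<Sum>z\<leftarrow>cb. T z) / K - ?e T)\<^sup>2) = ?E (\<lambda>cb. ((\<Sum>z\<leftarrow>cb. T z) - K * ?e T)\<^sup>2) / K\<^sup>2"
  proof -
    have "((\<Sum>z\<leftarrow>cb. T z) / K - ?e T)\<^sup>2 = ((\<Sum>z\<leftarrow>cb. T z) - K * ?e T)\<^sup>2 / K\<^sup>2" for cb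
      using K by (simp add: power_divide[symmetric] diff_divide_distrib)
    then show ?thesis by simp
  qed
  also have "\<dots> = ?e (\<lambda>z. (T z - ?e T)\<^sup>2) / K"
    using variance_iid_sum_list[OF fin, of K T] K by (simp add: power2_eq_square)
  also have "\<dots> \<le> c * ?e T / K"
    using variance_le_bound_mult_expectation[OF fin T] K by (simp add: divide_right_mono)
  finally show ?thesis by simp
qed

section \<open>Total variation distance\<close>

lemma tv_dist_finite:
  assumes "finite S" "set_pmf A \<subseteq> S" "set_pmf B \<subseteq> S"
  shows "tv_dist A B = ennreal (\<Sum>z\<in>S. \<bar>pmf A z - pmf B z\<bar>)"
proof -
  have "tv_dist A B = (\<integral>\<^sup>+ x. ennreal \<bar>pmf A x - pmf B x\<bar> * indicator S x \<partial>count_space UNIV)"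
    unfolding tv_dist_def
  proof (intro nn_integral_cong)
    fix x
    have "x \<notin> S \<Longrightarrow> pmf A x = 0 \<and> pmf B x = 0" using assms by (auto simp: pmf_eq_0_set_pmf)
    then show "ennreal \<bar>pmf A x - pmf B x\<bar> = ennreal \<bar>pmf A x - pmf B x\<bar> * indicator S x"
      by (auto simp: indicator_def)
  qed
  also have "\<dots> = (\<Sum>z\<in>S. ennreal \<bar>pmf A z - pmf B z\<bar>)"
    by (simp add: nn_integral_count_space_indicator[symmetric] nn_integral_count_space_finite assms)
  also have "\<dots> = ennreal (\<Sum>z\<in>S. \<bar>pmf A z - pmf B z\<bar>)"
    by (rule sum_ennreal) simp
  finally show ?thesis .
qed

lemma pmf_map_pmf_finite:
  assumes "finite S" "set_pmf A \<subseteq> S"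
  shows "pmf (map_pmf \<phi> A) y = (\<Sum>z\<in>{z\<in>S. \<phi> z = y}. pmf A z)"
proof -
  have "measure_pmf.prob A (\<phi> -` {y}) = measure_pmf.prob A {z\<in>S. \<phi> z = y}"
    using assms by (intro measure_eq_AE) (auto simp: AE_measure_pmf_iff)
  then show ?thesis
    using assms by (simp add: pmf_map measure_measure_pmf_finite)
qed

lemma tv_dist_map_pmf_le:
  assumes "finite (set_pmf A)" "finite (set_pmf B)"
  shows "tv_dist (map_pmf \<phi> A) (map_pmf \<phi> B) \<le> tv_dist A B"
proof -
  define S where "S = set_pmf A \<union> set_pmf B"
  have S: "finite S" "set_pmf A \<subseteq> S" "set_pmf B \<subseteq> S" using assms by (auto simp: S_def)
  have "tv_dist (map_pmf \<phi> A) (map_pmf \<phi> B) = ennreal (\<Sum>y\<in>\<phi> ` S. \<bar>\<Sum>z\<in>{z\<in>S. \<phi> z = y}. pmf A z - pmf B z\<bar>)"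
    using S by (subst tv_dist_finite[of "\<phi> ` S"])
      (auto simp: pmf_map_pmf_finite[OF S(1,2)] pmf_map_pmf_finite[OF S(1,3)] sum_subtractf)
  also have "\<dots> \<le> ennreal (\<Sum>y\<in>\<phi> ` S. \<Sum>z\<in>{z\<in>S. \<phi> z = y}. \<bar>pmf A z - pmf B z\<bar>)"
    by (intro ennreal_leI sum_mono sum_abs)
  also have "\<dots> = tv_dist A B"
    using S by (simp add: tv_dist_finite[OF S] sum.image_gen[symmetric])
  finally show ?thesis .
qed

lemma pmf_bind_map_Pair:
  "pmf (bind_pmf M (\<lambda>x. map_pmf (Pair x) (D x))) (x, w) = pmf M x * pmf (D x) w"
proof -
  have "pmf (map_pmf (Pair x') (D x')) (x, w) = (if x' = x then pmf (D x) w else 0)" for x'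
    using pmf_map_inj'[of "Pair x" "D x" w] by (auto simp: inj_def pmf_eq_0_set_pmf)
  then show ?thesis unfolding pmf_bind
    by (subst integral_measure_pmf[of "{x}"]) (auto split: if_splits)
qed

lemma tv_dist_bind_map_Pair_le:
  fixes f :: "'a \<Rightarrow> real"
  assumes fin: "finite (set_pmf M)"
    and fin_DE: "\<And>x. x \<in> set_pmf M \<Longrightarrow> finite (set_pmf (D x)) \<and> finite (set_pmf (E x))"
    and le: "\<And>x. x \<in> set_pmf M \<Longrightarrow> tv_dist (D x) (E x) \<le> ennreal (f x)"
    and nonneg: "\<And>x. x \<in> set_pmf M \<Longrightarrow> 0 \<le> f x"
  shows "tv_dist (bind_pmf M (\<lambda>x. map_pmf (Pair x) (D x))) (bind_pmf M (\<lambda>x. map_pmf (Pair x) (E x)))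
       \<le> ennreal (measure_pmf.expectation M f)"
proof -
  define S where "S x = set_pmf (D x) \<union> set_pmf (E x)" for x
  define d where "d x = (\<Sum>w\<in>S x. \<bar>pmf (D x) w - pmf (E x) w\<bar>)" for x
  let ?DE = "\<lambda>z. \<bar>pmf (bind_pmf M (\<lambda>x. map_pmf (Pair x) (D x))) z - pmf (bind_pmf M (\<lambda>x. map_pmf (Pair x) (E x))) z\<bar>"
  have S: "x \<in> set_pmf M \<Longrightarrow> finite (S x) \<and> set_pmf (D x) \<subseteq> S x \<and> set_pmf (E x) \<subseteq> S x" for x
    using fin_DE by (auto simp: S_def)
  have d_le: "d x \<le> f x" if "x \<in> set_pmf M" for x
  proof -
    have "ennreal (d x) \<le> ennreal (f x)"
      using le[OF that] S[OF that] tv_dist_finite[of "S x" "D x" "E x"] by (simp add: d_def)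
    then show ?thesis using nonneg[OF that] by (simp add: ennreal_le_iff)
  qed
  have "(\<Sum>z\<in>Sigma (set_pmf M) S. ?DE z) = (\<Sum>x\<in>set_pmf M. \<Sum>w\<in>S x. ?DE (x, w))"
    using fin S by (subst sum.Sigma) auto
  also have "\<dots> = (\<Sum>x\<in>set_pmf M. pmf M x * d x)"
    by (simp add: pmf_bind_map_Pair d_def sum_distrib_left abs_mult right_diff_distrib[symmetric])
  also have "\<dots> \<le> (\<Sum>x\<in>set_pmf M. pmf M x * f x)"
    by (intro sum_mono mult_left_mono d_le) auto
  also have "\<dots> = measure_pmf.expectation M f"
    by (subst integral_measure_pmf[OF fin]) (auto simp: mult.commute)
  finally show ?thesis
    using fin S by (subst tv_dist_finite[of "Sigma (set_pmf M) S"]) (auto intro: ennreal_leI)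
qed

section \<open>Soft covering\<close>

lemma set_pmf_of_set_lessThan: "K > 0 \<Longrightarrow> set_pmf (pmf_of_set {..<K}) = {..<(K::nat)}"
  by (intro set_pmf_of_set) auto

lemma pmf_uniform_mixture:
  assumes "length cb = K" "K > 0"
  shows "pmf (bind_pmf (pmf_of_set {..<K}) (\<lambda>k. Wc (cb ! k))) b = (\<Sum>z\<leftarrow>cb. pmf (Wc z) b) / K"
  using assms unfolding pmf_bind
  by (subst integral_pmf_of_set) (auto simp: sum_list_sum_nth atLeast0LessThan)

text \<open>Each channel probability is split into a part bounded by t times the output probability,
  whose empirical mean over the codebook concentrates, and an excess part.\<close>

lemma soft_covering:
  fixes \<mu> :: "'a pmf" and Wc :: "'a \<Rightarrow> 'b pmf"
  assumes fin: "finite (set_pmf \<mu>)" and finW: "\<And>a. a \<in> set_pmf \<mu> \<Longrightarrow> finite (set_pmf (Wc a))"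
    and K: "K > 0" and t: "t > 0"
  defines "Q \<equiv> bind_pmf \<mu> Wc" and "B \<equiv> (\<Union>a\<in>set_pmf \<mu>. set_pmf (Wc a))"
  shows "measure_pmf.expectation (iid_pmf K \<mu>)
      (\<lambda>cb. \<Sum>b\<in>B. \<bar>pmf (bind_pmf (pmf_of_set {..<K}) (\<lambda>k. Wc (cb ! k))) b - pmf Q b\<bar>)
    \<le> sqrt (t / K) + 2 * measure_pmf.expectation \<mu>
        (\<lambda>a. \<Sum>b\<in>B. if pmf (Wc a) b > t * pmf Q b then pmf (Wc a) b else 0)"
proof -
  let ?E = "measure_pmf.expectation (iid_pmf K \<mu>)" and ?e = "measure_pmf.expectation \<mu>"
  define T where "T b a = (if pmf (Wc a) b > t * pmf Q b then 0 else pmf (Wc a) b)" for b a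
  define U where "U b a = (if pmf (Wc a) b > t * pmf Q b then pmf (Wc a) b else 0)" for b a
  have finB: "finite B" using fin finW by (auto simp: B_def)
  have fin_K: "finite (set_pmf (iid_pmf K \<mu>))" using finite_set_iid_pmf[OF fin] .
  have TU: "T b a + U b a = pmf (Wc a) b" for a b by (simp add: T_def U_def)
  have Q: "pmf Q b = ?e (T b) + ?e (U b)" for b
    unfolding Q_def pmf_bind TU[symmetric] using fin
    by (simp add: Bochner_Integration.integral_add integrable_measure_pmf_finite)
  have T: "0 \<le> T b a" "T b a \<le> t * pmf Q b" and U: "0 \<le> U b a" for a b
    using t by (simp_all add: T_def U_def)
  have "?E (\<lambda>cb. \<Sum>b\<in>B. \<bar>pmf (bind_pmf (pmf_of_set {..<K}) (\<lambda>k. Wc (cb ! k))) b - pmf Q b\<bar>)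
      = (\<Sum>b\<in>B. ?E (\<lambda>cb. \<bar>(\<Sum>z\<leftarrow>cb. T b z + U b z) / K - (?e (T b) + ?e (U b))\<bar>))"
    using fin_K K
    by (subst Bochner_Integration.integral_sum[symmetric])
       (auto intro!: sum.cong integral_cong_AE simp: integrable_measure_pmf_finite AE_measure_pmf_iff
         pmf_uniform_mixture length_of_set_iid_pmf TU Q[symmetric])
  also have "\<dots> \<le> (\<Sum>b\<in>B. sqrt (t / K) * sqrt (pmf Q b * ?e (T b)) + 2 * ?e (U b))"
    using expectation_empirical_mean_deviation[OF fin K T U]
    by (intro sum_mono) (simp add: real_sqrt_mult[symmetric] mult.assoc)
  also have "\<dots> \<le> sqrt (t / K) + 2 * (\<Sum>b\<in>B. ?e (U b))"
  proof -
    have "(\<Sum>b\<in>B. ?e (T b)) \<le> (\<Sum>b\<in>B. pmf Q b)"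
      by (intro sum_mono) (simp add: Q U)
    moreover have "(\<Sum>b\<in>B. pmf Q b) \<le> 1"
      using sum_pmf_eq_1[OF finB] by (simp add: B_def Q_def)
    ultimately have "(\<Sum>b\<in>B. sqrt (pmf Q b * ?e (T b))) \<le> 1"
      by (intro sum_sqrt_mult_le_1) (auto simp: T)
    then have "sqrt (t / K) * (\<Sum>b\<in>B. sqrt (pmf Q b * ?e (T b))) \<le> sqrt (t / K)"
      using t by (intro mult_left_le) auto
    then show ?thesis
      by (simp add: sum.distrib sum_distrib_left[symmetric])
  qed
  also have "(\<Sum>b\<in>B. ?e (U b)) = ?e (\<lambda>a. \<Sum>b\<in>B. U b a)"
    using fin by (simp add: integrable_measure_pmf_finite)
  finally show ?thesis by (simp add: U_def)
qed

definition info_density :: "('x \<Rightarrow> 'v pmf) \<Rightarrow> ('x \<Rightarrow> 'v \<Rightarrow> 'w pmf) \<Rightarrow> 'x \<times> 'v \<times> 'w \<Rightarrow> real" where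
  "info_density \<kappa> W = (\<lambda>(x, f, w). log 2 (pmf (W x f) w / pmf (bind_pmf (\<kappa> x) (W x)) w))"

lemma log_prod_ratio_gt:
  fixes a b :: "nat \<Rightarrow> real"
  assumes A: "finite A" and pos: "\<And>i. i \<in> A \<Longrightarrow> a i > 0 \<and> b i > 0" and t: "t > 0"
    and gt: "prod a A > t * prod b A"
  shows "(\<Sum>i\<in>A. log 2 (a i / b i)) > log 2 t"
proof -
  have "prod b A > 0" using pos by (simp add: prod_pos)
  then have "t < prod (\<lambda>i. a i / b i) A" using gt by (simp add: prod_dividef field_simps)
  then have "log 2 t < log 2 (prod (\<lambda>i. a i / b i) A)" using t by simp
  also have "\<dots> = (\<Sum>i\<in>A. log 2 (a i / b i))"
  proof -
    have "ln (prod (\<lambda>i. a i / b i) A) = (\<Sum>i\<in>A. ln (a i / b i))"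
      using ln_prod[OF A, of "\<lambda>i. a i / b i"] pos by force
    then show ?thesis by (simp add: log_def sum_divide_distrib)
  qed
  finally show ?thesis .
qed

lemma info_density_gt_of_pmf_gt:
  assumes fs: "fs \<in> set_pmf (Pi_list_pmf (map \<kappa> xs))" and ws: "ws \<in> set_pmf (memoryless_channel W xs fs)"
    and t: "t > 0"
    and gt: "pmf (memoryless_channel W xs fs) ws > t * pmf (Pi_list_pmf (map (\<lambda>x. bind_pmf (\<kappa> x) (W x)) xs)) ws"
  shows "(\<Sum>z\<leftarrow>zip xs (zip fs ws). info_density \<kappa> W z) > log 2 t"
proof -
  define n where "n = length xs"
  have lf: "length fs = n" using length_of_set_Pi_list_pmf[OF fs] by (simp add: n_def)
  have lw: "length ws = n" using length_of_set_memoryless_channel[OF ws] lf by (simp add: n_def)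
  define a where "a i = pmf (W (xs ! i) (fs ! i)) (ws ! i)" for i
  define b where "b i = pmf (bind_pmf (\<kappa> (xs ! i)) (W (xs ! i))) (ws ! i)" for i
  have "a i > 0 \<and> b i > 0" if "i < n" for i
  proof -
    have "fs ! i \<in> set_pmf (\<kappa> (xs ! i))"
      using nth_of_set_Pi_list_pmf[OF fs, of i] that by (simp add: n_def)
    moreover have "ws ! i \<in> set_pmf (W (xs ! i) (fs ! i))"
      using nth_of_set_Pi_list_pmf[OF ws[unfolded memoryless_channel_def], of i] that lf
      by (simp add: n_def)
    ultimately show ?thesis by (auto simp: a_def b_def set_bind_pmf intro!: pmf_positive)
  qed
  moreover have "pmf (memoryless_channel W xs fs) ws = prod a {..<n}"
    "pmf (Pi_list_pmf (map (\<lambda>x. bind_pmf (\<kappa> x) (W x)) xs)) ws = prod b {..<n}"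
    using lf lw
    by (simp_all add: memoryless_channel_def pmf_Pi_list_pmf prod.list_conv_set_nth a_def b_def
        atLeast0LessThan n_def)
  ultimately have "log 2 t < (\<Sum>i<n. log 2 (a i / b i))"
    using t gt by (intro log_prod_ratio_gt) auto
  also have "\<dots> = (\<Sum>z\<leftarrow>zip xs (zip fs ws). info_density \<kappa> W z)"
    using lf lw by (simp add: sum_list_sum_nth atLeast0LessThan a_def b_def n_def info_density_def)
  finally show ?thesis .
qed

lemma sum_if_pmf_eq_prob:
  assumes "finite B" "set_pmf M \<subseteq> B"
  shows "(\<Sum>b\<in>B. if P b then pmf M b else 0) = measure_pmf.prob M {b. P b}"
proof -
  have "measure_pmf.prob M {b. P b} = measure_pmf.prob M {b\<in>B. P b}"
    using assms by (intro measure_eq_AE) (auto simp: AE_measure_pmf_iff)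
  then show ?thesis
    using assms by (simp add: measure_measure_pmf_finite sum.inter_filter)
qed

lemma excess_mass_le_prob_info_density:
  assumes fs: "fs \<in> set_pmf (Pi_list_pmf (map \<kappa> xs))" and t: "t > 0"
    and B: "finite B" "set_pmf (memoryless_channel W xs fs) \<subseteq> B"
  shows "(\<Sum>b\<in>B. if pmf (memoryless_channel W xs fs) b > t * pmf (Pi_list_pmf (map (\<lambda>x. bind_pmf (\<kappa> x) (W x)) xs)) b
            then pmf (memoryless_channel W xs fs) b else 0)
    \<le> measure_pmf.prob (memoryless_channel W xs fs)
         {ws. log 2 t < (\<Sum>z\<leftarrow>zip xs (zip fs ws). info_density \<kappa> W z)}"
  unfolding sum_if_pmf_eq_prob[OF B]
  by (rule measure_pmf.finite_measure_mono_AE)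
     (auto simp: AE_measure_pmf_iff intro: info_density_gt_of_pmf_gt[OF fs _ t])

lemma exists_codebook_for_sequence:
  assumes fin_\<kappa>: "\<And>x. x \<in> set xs \<Longrightarrow> finite (set_pmf (\<kappa> x))"
    and fin_W: "\<And>x f. finite (set_pmf (W x f))"
    and K: "K > 0" and t: "t > 0"
  defines "\<mu> \<equiv> Pi_list_pmf (map \<kappa> xs)"
  shows "\<exists>cb\<in>set_pmf (iid_pmf K \<mu>).
    tv_dist (bind_pmf (pmf_of_set {..<K}) (\<lambda>k. memoryless_channel W xs (cb ! k)))
            (Pi_list_pmf (map (\<lambda>x. bind_pmf (\<kappa> x) (W x)) xs))
    \<le> ennreal (sqrt (t / K) + 2 * measure_pmf.expectation \<mu> (\<lambda>fs. measure_pmf.prob (memoryless_channel W xs fs)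
         {ws. log 2 t < (\<Sum>z\<leftarrow>zip xs (zip fs ws). info_density \<kappa> W z)}))"
proof -
  let ?Wc = "memoryless_channel W xs" and ?Q = "Pi_list_pmf (map (\<lambda>x. bind_pmf (\<kappa> x) (W x)) xs)"
  define B where "B = (\<Union>fs\<in>set_pmf \<mu>. set_pmf (?Wc fs))"
  have fin_\<mu>: "finite (set_pmf \<mu>)" unfolding \<mu>_def using fin_\<kappa> by (intro finite_set_Pi_list_pmf) auto
  have fin_Wc: "finite (set_pmf (?Wc fs))" for fs
    using fin_W by (rule finite_set_memoryless_channel)
  have Q: "?Q = bind_pmf \<mu> ?Wc" unfolding \<mu>_def by (rule bind_memoryless_channel[symmetric])
  have B: "finite B" "set_pmf ?Q \<subseteq> B" using fin_\<mu> fin_Wc by (auto simp: B_def Q)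
  have "measure_pmf.expectation (iid_pmf K \<mu>)
      (\<lambda>cb. \<Sum>b\<in>B. \<bar>pmf (bind_pmf (pmf_of_set {..<K}) (\<lambda>k. ?Wc (cb ! k))) b - pmf ?Q b\<bar>)
    \<le> sqrt (t / K) + 2 * measure_pmf.expectation \<mu>
        (\<lambda>fs. \<Sum>b\<in>B. if pmf (?Wc fs) b > t * pmf ?Q b then pmf (?Wc fs) b else 0)"
    unfolding Q B_def by (rule soft_covering[OF fin_\<mu> fin_Wc K t])
  also have "\<dots> \<le> sqrt (t / K) + 2 * measure_pmf.expectation \<mu> (\<lambda>fs. measure_pmf.prob (?Wc fs)
         {ws. log 2 t < (\<Sum>z\<leftarrow>zip xs (zip fs ws). info_density \<kappa> W z)})"
  proof -
    have "(\<Sum>b\<in>B. if pmf (?Wc fs) b > t * pmf ?Q b then pmf (?Wc fs) b else 0)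
        \<le> measure_pmf.prob (?Wc fs) {ws. log 2 t < (\<Sum>z\<leftarrow>zip xs (zip fs ws). info_density \<kappa> W z)}"
      if "fs \<in> set_pmf \<mu>" for fs
      using that t B(1) by (intro excess_mass_le_prob_info_density) (auto simp: \<mu>_def B_def)
    then show ?thesis
      using fin_\<mu> by (intro add_left_mono mult_left_mono integral_mono_AE)
        (auto simp: integrable_measure_pmf_finite AE_measure_pmf_iff)
  qed
  finally obtain cb where cb: "cb \<in> set_pmf (iid_pmf K \<mu>)" and
    le: "(\<Sum>b\<in>B. \<bar>pmf (bind_pmf (pmf_of_set {..<K}) (\<lambda>k. ?Wc (cb ! k))) b - pmf ?Q b\<bar>)
      \<le> sqrt (t / K) + 2 * measure_pmf.expectation \<mu> (\<lambda>fs. measure_pmf.prob (?Wc fs)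
         {ws. log 2 t < (\<Sum>z\<leftarrow>zip xs (zip fs ws). info_density \<kappa> W z)})"
    using exists_in_set_pmf_le_expectation[OF finite_set_iid_pmf[OF fin_\<mu>]] by blast
  have "set_pmf (bind_pmf (pmf_of_set {..<K}) (\<lambda>k. ?Wc (cb ! k))) \<subseteq> B"
    using cb K by (auto simp: B_def set_pmf_of_set_lessThan iid_pmf_eq_Pi_list_pmf set_Pi_list_pmf list_all2_conv_all_nth)
  then show ?thesis
    using cb le B by (intro bexI[OF _ cb]) (simp add: tv_dist_finite[of B] ennreal_leI)
qed

lemma prob_iid_joint_pmf:
  assumes fin_px: "finite (set_pmf px)" and fin_\<kappa>: "\<And>x. x \<in> set_pmf px \<Longrightarrow> finite (set_pmf (\<kappa> x))"
    and fin_W: "\<And>x f. finite (set_pmf (W x f))"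
  shows "measure_pmf.prob (iid_pmf n (joint_pmf px \<kappa> W)) A =
    measure_pmf.expectation (iid_pmf n px) (\<lambda>xs. measure_pmf.expectation (Pi_list_pmf (map \<kappa> xs))
      (\<lambda>fs. measure_pmf.prob (memoryless_channel W xs fs) ((\<lambda>ws. zip xs (zip fs ws)) -` A)))"
proof -
  have fin_\<mu>: "finite (set_pmf (Pi_list_pmf (map \<kappa> xs)))" if "xs \<in> set_pmf (iid_pmf n px)" for xs
    using that fin_\<kappa> by (intro finite_set_Pi_list_pmf) (auto dest: set_of_set_iid_pmf)
  show ?thesis
    unfolding iid_joint_pmf using finite_set_iid_pmf[OF fin_px] fin_\<mu> finite_set_memoryless_channel[where W=W, OF fin_W]
    by (auto simp: prob_bind_pmf_finite AE_measure_pmf_iff intro!: integral_cong_AE)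
qed

lemma exists_codebook:
  assumes fin_px: "finite (set_pmf px)" and fin_\<kappa>: "\<And>x. x \<in> set_pmf px \<Longrightarrow> finite (set_pmf (\<kappa> x))"
    and fin_W: "\<And>x f. finite (set_pmf (W x f))"
    and K: "K > 0" and t: "t > 0"
  shows "\<exists>cb. (\<forall>xs\<in>set_pmf (iid_pmf n px). \<forall>k<K. cb xs ! k \<in> set_pmf (Pi_list_pmf (map \<kappa> xs))) \<and>
    tv_dist (bind_pmf (iid_pmf n px) (\<lambda>xs. map_pmf (Pair xs)
               (bind_pmf (pmf_of_set {..<K}) (\<lambda>k. memoryless_channel W xs (cb xs ! k)))))
            (bind_pmf (iid_pmf n px) (\<lambda>xs. map_pmf (Pair xs) (Pi_list_pmf (map (\<lambda>x. bind_pmf (\<kappa> x) (W x)) xs))))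
    \<le> ennreal (sqrt (t / K) + 2 * measure_pmf.prob (iid_pmf n (joint_pmf px \<kappa> W))
                                 {zs. log 2 t < (\<Sum>z\<leftarrow>zs. info_density \<kappa> W z)})"
proof -
  let ?X = "iid_pmf n px"
  define err where "err xs = sqrt (t / K) + 2 * measure_pmf.expectation (Pi_list_pmf (map \<kappa> xs))
    (\<lambda>fs. measure_pmf.prob (memoryless_channel W xs fs)
      {ws. log 2 t < (\<Sum>z\<leftarrow>zip xs (zip fs ws). info_density \<kappa> W z)})" for xs
  have fin_X: "finite (set_pmf ?X)" using finite_set_iid_pmf[OF fin_px] .
  have "\<exists>cb\<in>set_pmf (iid_pmf K (Pi_list_pmf (map \<kappa> xs))).
      tv_dist (bind_pmf (pmf_of_set {..<K}) (\<lambda>k. memoryless_channel W xs (cb ! k)))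
              (Pi_list_pmf (map (\<lambda>x. bind_pmf (\<kappa> x) (W x)) xs)) \<le> ennreal (err xs)"
    if "xs \<in> set_pmf ?X" for xs
    unfolding err_def using that fin_\<kappa>
    by (intro exists_codebook_for_sequence fin_W K t) (auto dest: set_of_set_iid_pmf)
  then obtain cb where cb: "\<And>xs. xs \<in> set_pmf ?X \<Longrightarrow> cb xs \<in> set_pmf (iid_pmf K (Pi_list_pmf (map \<kappa> xs)))"
    and tv: "\<And>xs. xs \<in> set_pmf ?X \<Longrightarrow>
      tv_dist (bind_pmf (pmf_of_set {..<K}) (\<lambda>k. memoryless_channel W xs (cb xs ! k)))
              (Pi_list_pmf (map (\<lambda>x. bind_pmf (\<kappa> x) (W x)) xs)) \<le> ennreal (err xs)"
    by metis
  have cb_k: "\<forall>xs\<in>set_pmf ?X. \<forall>k<K. cb xs ! k \<in> set_pmf (Pi_list_pmf (map \<kappa> xs))"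
    using cb by (auto simp: iid_pmf_eq_Pi_list_pmf set_Pi_list_pmf list_all2_conv_all_nth)
  have "tv_dist (bind_pmf ?X (\<lambda>xs. map_pmf (Pair xs)
               (bind_pmf (pmf_of_set {..<K}) (\<lambda>k. memoryless_channel W xs (cb xs ! k)))))
            (bind_pmf ?X (\<lambda>xs. map_pmf (Pair xs) (Pi_list_pmf (map (\<lambda>x. bind_pmf (\<kappa> x) (W x)) xs))))
      \<le> ennreal (measure_pmf.expectation ?X err)"
  proof (rule tv_dist_bind_map_Pair_le[OF fin_X _ tv])
    fix xs assume xs: "xs \<in> set_pmf ?X"
    then have fin_\<mu>: "finite (set_pmf (Pi_list_pmf (map \<kappa> xs)))"
      using fin_\<kappa> by (intro finite_set_Pi_list_pmf) (auto dest: set_of_set_iid_pmf)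
    show "finite (set_pmf (bind_pmf (pmf_of_set {..<K}) (\<lambda>k. memoryless_channel W xs (cb xs ! k)))) \<and>
        finite (set_pmf (Pi_list_pmf (map (\<lambda>x. bind_pmf (\<kappa> x) (W x)) xs)))"
      using cb_k xs finite_set_memoryless_channel[where W=W, OF fin_W] fin_\<mu> K by (simp add: set_pmf_of_set_lessThan bind_memoryless_channel[symmetric])
    show "0 \<le> err xs"
      unfolding err_def using t by (intro add_nonneg_nonneg mult_nonneg_nonneg integral_nonneg) auto
  qed
  also have "measure_pmf.expectation ?X err = sqrt (t / K) + 2 * measure_pmf.prob (iid_pmf n (joint_pmf px \<kappa> W))
                                 {zs. log 2 t < (\<Sum>z\<leftarrow>zs. info_density \<kappa> W z)}"
    using prob_iid_joint_pmf[where px=px and \<kappa>=\<kappa> and W=W and n=n and A="{zs. log 2 t < (\<Sum>z\<leftarrow>zs. info_density \<kappa> W z)}", OF fin_px fin_\<kappa> fin_W] fin_X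
    by (simp add: err_def[abs_def] vimage_def Bochner_Integration.integral_add integrable_measure_pmf_finite)
  finally show ?thesis using cb_k by blast
qed

section \<open>Conditional kernels\<close>

text \<open>Conditional laws are only meaningful at points of the support, where cond_pmf conditions on
  an event of positive probability; all lemmas below assume such points.\<close>

definition cond_snd_pmf :: "('a \<times> 'b) pmf \<Rightarrow> 'a \<Rightarrow> 'b pmf" where
  "cond_snd_pmf V a = map_pmf snd (cond_pmf V {z. fst z = a})"

lemma measure_cond_snd_pmf:
  assumes "a \<in> fst ` set_pmf V"
  shows "measure_pmf.prob (cond_snd_pmf V a) A =
    measure_pmf.prob V {z. fst z = a \<and> snd z \<in> A} / measure_pmf.prob V {z. fst z = a}"
proof -
  have ne: "set_pmf V \<inter> {z. fst z = a} \<noteq> {}" using assms by auto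
  have "measure_pmf.prob (cond_pmf V {z. fst z = a}) B = measure_pmf.prob V ({z. fst z = a} \<inter> B) / measure_pmf.prob V {z. fst z = a}" for B
    unfolding cond_pmf.rep_eq[OF ne]
    by (rule measure_uniform_measure) (auto simp: emeasure_measure_pmf_not_zero[OF ne] measure_pmf.emeasure_finite)
  then show ?thesis
    unfolding cond_snd_pmf_def measure_map_pmf by (simp add: Int_def vimage_def)
qed

lemma pmf_cond_snd_pmf:
  assumes "a \<in> fst ` set_pmf V"
  shows "pmf (cond_snd_pmf V a) b = pmf V (a, b) / measure_pmf.prob V {z. fst z = a}"
proof -
  have "{z. fst z = a \<and> snd z \<in> {b}} = {(a, b)}" by auto
  then show ?thesis
    using measure_cond_snd_pmf[OF assms, of "{b}"] by (simp add: measure_pmf_single)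
qed

lemma set_cond_snd_pmf:
  assumes "a \<in> fst ` set_pmf V"
  shows "set_pmf (cond_snd_pmf V a) = {b. (a, b) \<in> set_pmf V}"
proof -
  have "set_pmf V \<inter> {z. fst z = a} \<noteq> {}" using assms by auto
  then show ?thesis by (force simp: cond_snd_pmf_def set_cond_pmf)
qed

lemma bind_cond_snd_pmf: "bind_pmf (map_pmf fst V) (\<lambda>a. map_pmf (Pair a) (cond_snd_pmf V a)) = V"
proof -
  have "map_pmf (Pair a) (cond_snd_pmf V a) = cond_pmf V {z. fst z = a}" if "a \<in> set_pmf (map_pmf fst V)" for a
  proof -
    have "set_pmf V \<inter> {z. fst z = a} \<noteq> {}" using that by auto
    then have "map_pmf (Pair a \<circ> snd) (cond_pmf V {z. fst z = a}) = map_pmf id (cond_pmf V {z. fst z = a})"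
      by (intro map_pmf_cong) (auto simp: set_cond_pmf)
    then show ?thesis by (simp add: cond_snd_pmf_def pmf.map_comp)
  qed
  then have "bind_pmf (map_pmf fst V) (\<lambda>a. map_pmf (Pair a) (cond_snd_pmf V a))
      = bind_pmf (map_pmf fst V) (\<lambda>a. cond_pmf V {z. fst z = a})"
    by (intro bind_pmf_cong) auto
  also have "\<dots> = V"
    by (rule bind_cond_pmf_cancel) (auto simp: vimage_def eq_commute)
  finally show ?thesis .
qed

definition cond_mid_pmf :: "('x \<times> 'v \<times> 'w) pmf \<Rightarrow> 'x \<Rightarrow> 'v pmf" where
  "cond_mid_pmf T x = map_pmf fst (cond_snd_pmf T x)"

definition cond_last_pmf :: "('x \<times> 'v \<times> 'w) pmf \<Rightarrow> 'x \<Rightarrow> 'v \<Rightarrow> 'w pmf" where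
  "cond_last_pmf T x v = cond_snd_pmf (map_pmf (\<lambda>(x, v, w). ((x, v), w)) T) (x, v)"

lemma prob_map_pmf_assoc:
  "measure_pmf.prob (map_pmf (\<lambda>(x, v, w). ((x, v), w)) T) A = measure_pmf.prob T {z. ((fst z, fst (snd z)), snd (snd z)) \<in> A}"
  by (simp add: measure_map_pmf vimage_def case_prod_beta)

lemma pmf_cond_last_pmf:
  assumes "(x, v, w') \<in> set_pmf T"
  shows "pmf (cond_last_pmf T x v) w = pmf T (x, v, w) / measure_pmf.prob T {z. fst z = x \<and> fst (snd z) = v}"
proof -
  have "(x, v) \<in> fst ` set_pmf (map_pmf (\<lambda>(x, v, w). ((x, v), w)) T)"
    using assms by force
  moreover have "pmf (map_pmf (\<lambda>(x, v, w). ((x, v), w)) T) ((x, v), w) = pmf T (x, v, w)"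
    using pmf_map_inj'[of "\<lambda>(x, v, w). ((x, v), w)" T "(x, v, w)"] by (simp add: inj_def)
  ultimately show ?thesis
    unfolding cond_last_pmf_def by (simp add: pmf_cond_snd_pmf prob_map_pmf_assoc case_prod_beta)
qed

lemma cond_snd_pmf_cond_snd_pmf:
  assumes "(x, v, w') \<in> set_pmf T"
  shows "cond_snd_pmf (cond_snd_pmf T x) v = cond_last_pmf T x v"
proof (rule pmf_eqI)
  fix w
  let ?p = "measure_pmf.prob T"
  have x: "x \<in> fst ` set_pmf T" using assms by force
  have v: "v \<in> fst ` set_pmf (cond_snd_pmf T x)" using assms by (force simp: set_cond_snd_pmf[OF x])
  have "?p {z. fst z = x} > 0" using assms by (auto intro!: measure_pmf_posI)
  moreover have "measure_pmf.prob (cond_snd_pmf T x) {z. fst z = v} = ?p {z. fst z = x \<and> fst (snd z) = v} / ?p {z. fst z = x}"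
    by (simp add: measure_cond_snd_pmf[OF x])
  ultimately show "pmf (cond_snd_pmf (cond_snd_pmf T x) v) w = pmf (cond_last_pmf T x v) w"
    using assms by (simp add: pmf_cond_snd_pmf[OF v] pmf_cond_snd_pmf[OF x] pmf_cond_last_pmf)
qed

lemma bind_cond_last_pmf:
  assumes "x \<in> fst ` set_pmf T"
  shows "bind_pmf (cond_mid_pmf T x) (\<lambda>v. map_pmf (Pair v) (cond_last_pmf T x v)) = cond_snd_pmf T x"
proof -
  have "bind_pmf (cond_mid_pmf T x) (\<lambda>v. map_pmf (Pair v) (cond_last_pmf T x v))
      = bind_pmf (cond_mid_pmf T x) (\<lambda>v. map_pmf (Pair v) (cond_snd_pmf (cond_snd_pmf T x) v))"
    using assms by (intro bind_pmf_cong)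
      (auto simp: cond_mid_pmf_def set_cond_snd_pmf cond_snd_pmf_cond_snd_pmf)
  then show ?thesis
    by (simp add: cond_mid_pmf_def bind_cond_snd_pmf)
qed

lemma set_cond_mid_pmf:
  assumes "x \<in> fst ` set_pmf T"
  shows "set_pmf (cond_mid_pmf T x) = {v. \<exists>w. (x, v, w) \<in> set_pmf T}"
  unfolding cond_mid_pmf_def set_map_pmf set_cond_snd_pmf[OF assms] by force

lemma joint_pmf_cond: "joint_pmf (map_pmf fst T) (cond_mid_pmf T) (cond_last_pmf T) = T"
proof -
  have "joint_pmf (map_pmf fst T) (cond_mid_pmf T) (cond_last_pmf T)
      = bind_pmf (map_pmf fst T) (\<lambda>x. map_pmf (Pair x) (bind_pmf (cond_mid_pmf T x) (\<lambda>v. map_pmf (Pair v) (cond_last_pmf T x v))))"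
    by (simp add: joint_pmf_def map_bind_pmf pmf.map_comp o_def)
  also have "\<dots> = bind_pmf (map_pmf fst T) (\<lambda>x. map_pmf (Pair x) (cond_snd_pmf T x))"
    by (intro bind_pmf_cong) (auto simp: bind_cond_last_pmf)
  finally show ?thesis by (simp add: bind_cond_snd_pmf)
qed

lemma pmf_bind_cond_last_pmf:
  assumes "x \<in> fst ` set_pmf T"
  shows "pmf (bind_pmf (cond_mid_pmf T x) (cond_last_pmf T x)) w =
    measure_pmf.prob T {z. fst z = x \<and> snd (snd z) = w} / measure_pmf.prob T {z. fst z = x}"
proof -
  have "bind_pmf (cond_mid_pmf T x) (cond_last_pmf T x) = map_pmf snd (cond_snd_pmf T x)"
    unfolding bind_cond_last_pmf[OF assms, symmetric] by (simp add: map_bind_pmf pmf.map_comp o_def)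
  then show ?thesis
    by (simp add: pmf_map measure_cond_snd_pmf[OF assms] vimage_def)
qed

lemma cond_mutual_info_eq_expectation_info_density:
  fixes P :: "'s pmf" and fa :: "'s \<Rightarrow> 'a" and fb :: "'s \<Rightarrow> 'b" and fc :: "'s \<Rightarrow> 'c"
  assumes fin: "finite (set_pmf P)"
  defines "T \<equiv> map_pmf (\<lambda>s. (fc s, fb s, fa s)) P"
  shows "cond_mutual_info P fa fb fc = measure_pmf.expectation T (info_density (cond_mid_pmf T) (cond_last_pmf T))"
proof -
  define \<sigma> :: "'c \<times> 'b \<times> 'a \<Rightarrow> 'a \<times> 'b \<times> 'c" where "\<sigma> = (\<lambda>(x, f, w). (w, f, x))"
  let ?p = "measure_pmf.prob T" and ?g = "info_density (cond_mid_pmf T) (cond_last_pmf T)"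
  have inj: "inj \<sigma>" by (auto simp: \<sigma>_def inj_def)
  have fin_T: "finite (set_pmf T)" using fin by (simp add: T_def)
  have abc: "map_pmf (\<lambda>s. (fa s, fb s, fc s)) P = map_pmf \<sigma> T"
    by (simp add: T_def pmf.map_comp o_def \<sigma>_def)
  have marginals: "pmf (map_pmf fc P) x = ?p {z. fst z = x}"
    "pmf (map_pmf (\<lambda>s. (fa s, fc s)) P) (w, x) = ?p {z. fst z = x \<and> snd (snd z) = w}"
    "pmf (map_pmf (\<lambda>s. (fb s, fc s)) P) (f, x) = ?p {z. fst z = x \<and> fst (snd z) = f}" for x f w
    by (simp_all add: T_def pmf_map measure_map_pmf vimage_def conj_commute)
  have "pmf (map_pmf \<sigma> T) (w, f, x) * log 2 (pmf (map_pmf \<sigma> T) (w, f, x) * pmf (map_pmf fc P) x /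
        (pmf (map_pmf (\<lambda>s. (fa s, fc s)) P) (w, x) * pmf (map_pmf (\<lambda>s. (fb s, fc s)) P) (f, x)))
      = pmf T (x, f, w) * ?g (x, f, w)" if z: "(x, f, w) \<in> set_pmf T" for x f w
  proof -
    have x: "x \<in> fst ` set_pmf T" using z by force
    have "?p {z. fst z = x} > 0" "?p {z. fst z = x \<and> fst (snd z) = f} > 0"
      "?p {z. fst z = x \<and> snd (snd z) = w} > 0" "pmf T (x, f, w) > 0"
      using z by (auto intro!: measure_pmf_posI simp: pmf_positive)
    moreover have "pmf (map_pmf \<sigma> T) (w, f, x) = pmf T (x, f, w)"
      using pmf_map_inj'[OF inj, of T "(x, f, w)"] by (simp add: \<sigma>_def)
    ultimately show ?thesis
      using z by (simp add: info_density_def marginals pmf_cond_last_pmf pmf_bind_cond_last_pmf[OF x] field_simps)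
  qed
  then have "cond_mutual_info P fa fb fc = (\<Sum>z\<in>set_pmf T. pmf T z * ?g z)"
    unfolding cond_mutual_info_def abc set_map_pmf
    by (subst sum.reindex[OF inj_on_subset[OF inj subset_UNIV]]) (auto intro!: sum.cong simp: \<sigma>_def)
  also have "\<dots> = measure_pmf.expectation T ?g"
    by (subst integral_measure_pmf[OF fin_T]) auto
  finally show ?thesis .
qed

lemma cond_mutual_info_cong:
  "(\<And>s. s \<in> set_pmf P \<Longrightarrow> fb s = fb' s) \<Longrightarrow> cond_mutual_info P fa fb fc = cond_mutual_info P fa fb' fc"
  unfolding cond_mutual_info_def by (simp cong: map_pmf_cong)

lemma markov_chain_map_pmf:
  "markov_chain (map_pmf \<phi> P) fa fb fc \<longleftrightarrow> markov_chain P (fa \<circ> \<phi>) (fb \<circ> \<phi>) (fc \<circ> \<phi>)"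
  by (simp add: markov_chain_def measure_map_pmf vimage_def)

lemma markov_chain_inj_middle:
  assumes "markov_chain P fa fb fc" and "inj \<sigma>"
  shows "markov_chain P fa (\<sigma> \<circ> fb) fc"
  unfolding markov_chain_def
proof (intro allI)
  fix a b c
  show "measure_pmf.prob P {w. fa w = a \<and> (\<sigma> \<circ> fb) w = b \<and> fc w = c} * measure_pmf.prob P {w. (\<sigma> \<circ> fb) w = b}
      = measure_pmf.prob P {w. fa w = a \<and> (\<sigma> \<circ> fb) w = b} * measure_pmf.prob P {w. (\<sigma> \<circ> fb) w = b \<and> fc w = c}"
  proof (cases "b \<in> range \<sigma>")
    case True
    then obtain b' where "b = \<sigma> b'" by blast
    then show ?thesis using assms by (simp add: markov_chain_def inj_eq)
  next
    case False
    then have "\<And>w. \<sigma> (fb w) \<noteq> b" by auto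
    then show ?thesis by simp
  qed
qed

lemma cond_snd_pmf_eq_pair_pmf_of_markov_chain:
  assumes mc: "markov_chain V (\<lambda>z. fst (snd z)) fst (\<lambda>z. snd (snd z))" and b: "b \<in> fst ` set_pmf V"
  shows "cond_snd_pmf V b = pair_pmf (map_pmf fst (cond_snd_pmf V b)) (map_pmf snd (cond_snd_pmf V b))"
proof (rule pmf_eqI)
  fix ac :: "'b \<times> 'c"
  obtain a c where ac: "ac = (a, c)" by (cases ac)
  let ?p = "measure_pmf.prob V"
  define pb pab pbc pabc where "pb = ?p {z. fst z = b}" and "pab = ?p {z. fst (snd z) = a \<and> fst z = b}"
    and "pbc = ?p {z. fst z = b \<and> snd (snd z) = c}"
    and "pabc = ?p {z. fst (snd z) = a \<and> fst z = b \<and> snd (snd z) = c}"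
  have "pb > 0" unfolding pb_def using b by (auto intro!: measure_pmf_posI)
  moreover have "pabc * pb = pab * pbc"
    using mc unfolding markov_chain_def pb_def pab_def pbc_def pabc_def by simp
  ultimately have "pabc / pb = (pab / pb) * (pbc / pb)"
    by (simp add: field_simps power2_eq_square)
  moreover have "{z. fst (snd z) = a \<and> fst z = b \<and> snd (snd z) = c} = {(b, a, c)}" by auto
  then have "pmf V (b, a, c) = pabc" by (simp add: pabc_def measure_pmf_single)
  moreover have "pmf (map_pmf fst (cond_snd_pmf V b)) a = pab / pb"
    "pmf (map_pmf snd (cond_snd_pmf V b)) c = pbc / pb"
    by (simp_all add: pmf_map measure_cond_snd_pmf[OF b] vimage_def conj_commute pab_def pbc_def pb_def)
  ultimately show "pmf (cond_snd_pmf V b) ac = pmf (pair_pmf (map_pmf fst (cond_snd_pmf V b)) (map_pmf snd (cond_snd_pmf V b))) ac"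
    unfolding ac by (simp add: pmf_cond_snd_pmf[OF b] pmf_pair pb_def)
qed

lemma markov_chain_product_kernel:
  assumes mc: "markov_chain (map_pmf (\<lambda>(x, v, w). ((x, v), w)) T) (\<lambda>z. fst (snd z)) fst (\<lambda>z. snd (snd z))"
  defines "W \<equiv> \<lambda>x v. pair_pmf (map_pmf fst (cond_last_pmf T x v)) (map_pmf snd (cond_last_pmf T x v))"
  shows "joint_pmf (map_pmf fst T) (cond_mid_pmf T) W = T"
    and "measure_pmf.expectation T (info_density (cond_mid_pmf T) W)
       = measure_pmf.expectation T (info_density (cond_mid_pmf T) (cond_last_pmf T))"
proof -
  have W: "W x v = cond_last_pmf T x v" if "(x, v, w) \<in> set_pmf T" for x v w
    unfolding W_def cond_last_pmf_def
    by (rule cond_snd_pmf_eq_pair_pmf_of_markov_chain[OF mc, symmetric]) (use that in force)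
  have bind_W: "bind_pmf (cond_mid_pmf T x) (W x) = bind_pmf (cond_mid_pmf T x) (cond_last_pmf T x)"
    if "x \<in> fst ` set_pmf T" for x
    using that W by (intro bind_pmf_cong) (auto simp: set_cond_mid_pmf)
  have "joint_pmf (map_pmf fst T) (cond_mid_pmf T) W = joint_pmf (map_pmf fst T) (cond_mid_pmf T) (cond_last_pmf T)"
    unfolding joint_pmf_def using W by (intro bind_pmf_cong refl) (auto simp: set_cond_mid_pmf)
  then show "joint_pmf (map_pmf fst T) (cond_mid_pmf T) W = T"
    by (simp add: joint_pmf_cond)
  show "measure_pmf.expectation T (info_density (cond_mid_pmf T) W)
      = measure_pmf.expectation T (info_density (cond_mid_pmf T) (cond_last_pmf T))"
  proof (intro integral_cong_AE)
    show "AE z in T. info_density (cond_mid_pmf T) W z = info_density (cond_mid_pmf T) (cond_last_pmf T) z"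
      unfolding AE_measure_pmf_iff
    proof
      fix z assume z: "z \<in> set_pmf T"
      obtain x v w where xvw: "z = (x, v, w)" by (cases z)
      then have "x \<in> fst ` set_pmf T" using z by force
      then show "info_density (cond_mid_pmf T) W z = info_density (cond_mid_pmf T) (cond_last_pmf T) z"
        using z W[of x v w] bind_W[of x] by (simp add: xvw info_density_def)
    qed
  qed simp_all
qed

section \<open>The two-round protocol\<close>

lemma exists_nat_pmf_encoding: "\<exists>(P :: nat pmf) dec. map_pmf dec P = D"
proof (intro exI)
  show "map_pmf (from_nat_into (set_pmf D)) (map_pmf (to_nat_on (set_pmf D)) D) = D"
    by (simp add: pmf.map_comp o_def countable_set_pmf map_pmf_idI)
qed

lemma mult_add_less_mult:
  fixes k1 k2 K1 K2 :: nat
  assumes "k1 < K1" "k2 < K2"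
  shows "k1 * K2 + k2 < K1 * K2"
proof -
  have "k1 * K2 + k2 < (k1 + 1) * K2" using assms(2) by simp
  also have "\<dots> \<le> K1 * K2" using assms(1) by (intro mult_right_mono) auto
  finally show ?thesis .
qed

lemma bind_pmf_of_set_lessThan_mult:
  fixes K1 K2 :: nat
  assumes "K1 > 0" "K2 > 0"
  shows "bind_pmf (pmf_of_set {..<K1 * K2}) G =
    bind_pmf (pmf_of_set {..<K1}) (\<lambda>k1. bind_pmf (pmf_of_set {..<K2}) (\<lambda>k2. G (k1 * K2 + k2)))"
proof -
  have "pair_pmf (pmf_of_set {..<K1}) (pmf_of_set {..<K2}) = pmf_of_set ({..<K1} \<times> {..<K2})"
  proof (rule pmf_eqI)
    fix z :: "nat \<times> nat"
    have "{..<K1} \<noteq> {}" "{..<K2} \<noteq> {}" "{..<K1} \<times> {..<K2} \<noteq> {}" using assms by auto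
    then show "pmf (pair_pmf (pmf_of_set {..<K1}) (pmf_of_set {..<K2})) z = pmf (pmf_of_set ({..<K1} \<times> {..<K2})) z"
      by (cases z) (simp add: pmf_pair pmf_of_set indicator_def card_cartesian_product)
  qed
  moreover have "bij_betw (\<lambda>(k1, k2). k1 * K2 + k2) ({..<K1} \<times> {..<K2}) {..<K1 * K2}"
  proof (rule bij_betwI[where g="\<lambda>k. (k div K2, k mod K2)"])
    show "(\<lambda>(k1, k2). k1 * K2 + k2) \<in> {..<K1} \<times> {..<K2} \<rightarrow> {..<K1 * K2}"
      by (auto intro: mult_add_less_mult)
  qed (use assms in \<open>auto simp: less_mult_imp_div_less\<close>)
  then have "map_pmf (\<lambda>(k1, k2). k1 * K2 + k2) (pmf_of_set ({..<K1} \<times> {..<K2})) = pmf_of_set {..<K1 * K2}"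
    using assms by (subst map_pmf_of_set_inj) (auto simp: bij_betw_def)
  ultimately have "pmf_of_set {..<K1 * K2} = map_pmf (\<lambda>(k1, k2). k1 * K2 + k2) (pair_pmf (pmf_of_set {..<K1}) (pmf_of_set {..<K2}))"
    by simp
  then show ?thesis
    by (simp add: pair_pmf_def bind_map_pmf bind_assoc_pmf bind_return_pmf)
qed

text \<open>A node realizes a channel with private randomness by drawing, for every position, a random
  table holding an independent output for each input letter.\<close>

lemma map_pmf_apply_iid_Pi_pmf:
  assumes "finite S" and "set zs \<subseteq> S"
  shows "map_pmf (\<lambda>hs. map2 (\<lambda>h z. h z) hs zs) (iid_pmf (length zs) (Pi_pmf S d V)) = Pi_list_pmf (map V zs)"
  using assms(2)
proof (induction zs)
  case (Cons z zs)
  have "map_pmf (\<lambda>hs. map2 (\<lambda>h z. h z) hs (z # zs)) (iid_pmf (length (z # zs)) (Pi_pmf S d V))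
     = bind_pmf (map_pmf (\<lambda>h. h z) (Pi_pmf S d V)) (\<lambda>y. map_pmf (\<lambda>ys. y # ys)
         (map_pmf (\<lambda>hs. map2 (\<lambda>h z. h z) hs zs) (iid_pmf (length zs) (Pi_pmf S d V))))"
    by (simp add: map_bind_pmf bind_map_pmf pmf.map_comp o_def)
  then show ?case
    using Cons assms(1) by (simp add: Pi_pmf_component)
qed simp

lemma bind_return_pmf_Pair: "bind_pmf A (\<lambda>a. bind_pmf B (\<lambda>b. return_pmf (f a, g b))) = pair_pmf (map_pmf f A) (map_pmf g B)"
  by (simp add: pair_pmf_def bind_assoc_pmf bind_return_pmf bind_map_pmf)

lemma random_tables_simulate_channel:
  assumes "finite S" and "set (zip xs fs) \<subseteq> S" and "length fs = n" and "length xs = n"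
  shows "bind_pmf (iid_pmf n (Pi_pmf S d1 (\<lambda>(x, f). W1 x f))) (\<lambda>h1. bind_pmf (iid_pmf n (Pi_pmf S d2 (\<lambda>(x, f). W2 x f)))
           (\<lambda>h2. return_pmf (map2 (\<lambda>h z. h z) h1 (zip xs fs), map2 (\<lambda>h z. h z) h2 (zip xs fs))))
    = map_pmf (\<lambda>ws. (map fst ws, map snd ws)) (memoryless_channel (\<lambda>x f. pair_pmf (W1 x f) (W2 x f)) xs fs)"
proof -
  have "length (zip xs fs) = n" using assms(3,4) by simp
  then have tables: "map_pmf (\<lambda>h. map2 (\<lambda>h z. h z) h (zip xs fs)) (iid_pmf n (Pi_pmf S d (\<lambda>(x, f). W x f)))
      = Pi_list_pmf (map2 W xs fs)" for d W
    using map_pmf_apply_iid_Pi_pmf[OF assms(1,2), of d "\<lambda>(x, f). W x f"] by simp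
  show ?thesis
    unfolding memoryless_channel_def Pi_list_pmf_pair_pmf bind_return_pmf_Pair tables ..
qed

lemma set_zip_subset_Sigma:
  assumes "xs \<in> set_pmf (iid_pmf n px)" and "fs \<in> set_pmf (Pi_list_pmf (map \<kappa> xs))"
  shows "set (zip xs fs) \<subseteq> Sigma (set_pmf px) (\<lambda>x. set_pmf (\<kappa> x))"
proof
  fix z assume "z \<in> set (zip xs fs)"
  moreover have "length fs = length xs" using assms(2) by (simp add: length_of_set_Pi_list_pmf)
  ultimately obtain i where "i < length xs" "z = (xs ! i, fs ! i)" by (auto simp: in_set_conv_nth)
  then show "z \<in> Sigma (set_pmf px) (\<lambda>x. set_pmf (\<kappa> x))"
    using nth_of_set_Pi_list_pmf[OF assms(2), of i] set_of_set_iid_pmf[OF assms(1), of "xs ! i"] by simp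
qed

lemma random_tables_output_law:
  fixes px :: "'x pmf" and \<kappa> :: "'x \<Rightarrow> 'v pmf" and W1 :: "'x \<Rightarrow> 'v \<Rightarrow> 'y1 pmf" and W2 :: "'x \<Rightarrow> 'v \<Rightarrow> 'y2 pmf"
  assumes fin_px: "finite (set_pmf px)" and fin_\<kappa>: "\<And>x. x \<in> set_pmf px \<Longrightarrow> finite (set_pmf (\<kappa> x))"
    and K1: "K1 > 0" and K2: "K2 > 0"
    and cb: "\<And>xs k. xs \<in> set_pmf (iid_pmf n px) \<Longrightarrow> k < K1 * K2 \<Longrightarrow> cb xs ! k \<in> set_pmf (Pi_list_pmf (map \<kappa> xs))"
  defines "S \<equiv> Sigma (set_pmf px) (\<lambda>x. set_pmf (\<kappa> x))"
  defines "T1 \<equiv> iid_pmf n (Pi_pmf S undefined (\<lambda>(x, f). W1 x f))" and "T2 \<equiv> iid_pmf n (Pi_pmf S undefined (\<lambda>(x, f). W2 x f))"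
  shows "bind_pmf (iid_pmf n px) (\<lambda>xs. bind_pmf (pair_pmf (pmf_of_set {..<K1}) T1) (\<lambda>a.
      bind_pmf (pair_pmf (pmf_of_set {..<K2}) T2) (\<lambda>b. return_pmf (xs, xs,
        map2 (\<lambda>h z. h z) (snd a) (zip xs (cb xs ! (fst a * K2 + fst b))),
        map2 (\<lambda>h z. h z) (snd b) (zip xs (cb xs ! (fst a * K2 + fst b)))))))
    = map_pmf (\<lambda>(xs, ws). (xs, xs, map fst ws, map snd ws)) (bind_pmf (iid_pmf n px) (\<lambda>xs. map_pmf (Pair xs)
        (bind_pmf (pmf_of_set {..<K1 * K2}) (\<lambda>k. memoryless_channel (\<lambda>x f. pair_pmf (W1 x f) (W2 x f)) xs (cb xs ! k)))))"
    (is "?lhs = ?rhs")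
proof -
  let ?apply = "\<lambda>h xs k. map2 (\<lambda>h z. h z) h (zip xs (cb xs ! k))"
  have "?lhs = bind_pmf (iid_pmf n px) (\<lambda>xs. bind_pmf (pmf_of_set {..<K1}) (\<lambda>k1.
      bind_pmf (pmf_of_set {..<K2}) (\<lambda>k2. map_pmf (\<lambda>(u, v). (xs, xs, u, v))
        (bind_pmf T1 (\<lambda>h1. bind_pmf T2 (\<lambda>h2. return_pmf (?apply h1 xs (k1 * K2 + k2), ?apply h2 xs (k1 * K2 + k2))))))))"
    unfolding pair_pmf_def
    apply (simp add: bind_assoc_pmf bind_return_pmf map_bind_pmf)
    apply (subst bind_commute_pmf[of T1])
    apply (simp add: bind_assoc_pmf bind_return_pmf)
    done
  also have "\<dots> = bind_pmf (iid_pmf n px) (\<lambda>xs. bind_pmf (pmf_of_set {..<K1}) (\<lambda>k1.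
      bind_pmf (pmf_of_set {..<K2}) (\<lambda>k2. map_pmf (\<lambda>ws. (xs, xs, map fst ws, map snd ws))
        (memoryless_channel (\<lambda>x f. pair_pmf (W1 x f) (W2 x f)) xs (cb xs ! (k1 * K2 + k2))))))"
  proof (intro bind_pmf_cong refl)
    fix xs k1 k2
    assume xs: "xs \<in> set_pmf (iid_pmf n px)"
      and "k1 \<in> set_pmf (pmf_of_set {..<K1})" "k2 \<in> set_pmf (pmf_of_set {..<K2})"
    then have "k1 * K2 + k2 < K1 * K2" using K1 K2 by (simp add: set_pmf_of_set_lessThan mult_add_less_mult)
    then have fs: "cb xs ! (k1 * K2 + k2) \<in> set_pmf (Pi_list_pmf (map \<kappa> xs))" by (rule cb[OF xs])
    have "finite S" using fin_px fin_\<kappa> by (simp add: S_def)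
    moreover have "set (zip xs (cb xs ! (k1 * K2 + k2))) \<subseteq> S"
      unfolding S_def by (rule set_zip_subset_Sigma[OF xs fs])
    ultimately show "map_pmf (\<lambda>(u, v). (xs, xs, u, v)) (bind_pmf T1 (\<lambda>h1. bind_pmf T2 (\<lambda>h2.
          return_pmf (?apply h1 xs (k1 * K2 + k2), ?apply h2 xs (k1 * K2 + k2)))))
        = map_pmf (\<lambda>ws. (xs, xs, map fst ws, map snd ws))
            (memoryless_channel (\<lambda>x f. pair_pmf (W1 x f) (W2 x f)) xs (cb xs ! (k1 * K2 + k2)))"
      unfolding T1_def T2_def
      using length_of_set_iid_pmf[OF xs] length_of_set_Pi_list_pmf[OF fs]
      by (subst random_tables_simulate_channel) (auto simp: pmf.map_comp o_def)
  qed
  also have "\<dots> = ?rhs"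
    by (simp add: bind_pmf_of_set_lessThan_mult[OF K1 K2] map_bind_pmf pmf.map_comp o_def)
  finally show ?thesis .
qed

definition code_exists :: "nat \<Rightarrow> ('x1 \<times> 'x2 \<times> 'y1 \<times> 'y2) pmf \<Rightarrow> real \<Rightarrow> real \<Rightarrow> nat \<Rightarrow> real \<Rightarrow> bool" where
  "code_exists r q R12 R21 n \<epsilon> \<longleftrightarrow>
    (\<exists>(P1::nat pmf) (P2::nat pmf)
        (e1::nat \<Rightarrow> 'x1 list \<Rightarrow> nat \<Rightarrow> nat list \<Rightarrow> nat) (e2::nat \<Rightarrow> 'x2 list \<Rightarrow> nat \<Rightarrow> nat list \<Rightarrow> nat)
        (d1::'x1 list \<Rightarrow> nat \<Rightarrow> nat list \<Rightarrow> 'y1 list) (d2::'x2 list \<Rightarrow> nat \<Rightarrow> nat list \<Rightarrow> 'y2 list).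
      let J = code_space n q P1 P2;
          C = (\<lambda>(xs, m1, m2). messages e1 e2 (map fst xs) (map snd xs) m1 m2 r);
          msg_law = (\<lambda>i. map_pmf (\<lambda>w. C w ! (i - 1)) J)
      in (\<Sum>i\<in>{i\<in>{1..r}. odd i}. entropy_pmf (msg_law i)) \<le> ennreal (real n * R12)
       \<and> (\<Sum>i\<in>{i\<in>{1..r}. even i}. entropy_pmf (msg_law i)) \<le> ennreal (real n * R21)
       \<and> tv_dist
           (map_pmf (\<lambda>(xs, m1, m2). (map fst xs, map snd xs,
                  d1 (map fst xs) m1 (C (xs, m1, m2)), d2 (map snd xs) m2 (C (xs, m1, m2)))) J)
           (map_pmf (\<lambda>zs. (map (\<lambda>(a,b,c,d). a) zs, map (\<lambda>(a,b,c,d). b) zs,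
                            map (\<lambda>(a,b,c,d). c) zs, map (\<lambda>(a,b,c,d). d) zs)) (iid_pmf n q))
         \<le> ennreal \<epsilon>)"

lemma admissible_iff_code_exists:
  "admissible r q R12 R21 \<longleftrightarrow> (\<forall>\<epsilon>>0. \<exists>n0. \<forall>n\<ge>n0. code_exists r q R12 R21 n \<epsilon>)"
  unfolding admissible_def code_exists_def ..

lemma map_pmf_code_space_diagonal:
  assumes qx: "map_pmf (\<lambda>(a, b, c, d). (a, b)) q = map_pmf (\<lambda>x. (x, x)) px"
    and P1: "map_pmf dec1 P1 = D1" and P2: "map_pmf dec2 P2 = D2"
  shows "map_pmf (\<lambda>(xs, m1, m2). G (map fst xs) (map snd xs) (dec1 m1) (dec2 m2)) (code_space n q P1 P2)
     = bind_pmf (iid_pmf n px) (\<lambda>xs. bind_pmf D1 (\<lambda>a. bind_pmf D2 (\<lambda>b. return_pmf (G xs xs a b))))"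
  unfolding code_space_def qx iid_pmf_map P1[symmetric] P2[symmetric]
  by (simp add: map_bind_pmf bind_map_pmf o_def)

text \<open>Node 1 sends a uniform index below K1 and node 2 a uniform index below K2, both drawn from
  private randomness; the pair of indices selects a codeword, from which each node synthesizes
  its output with random tables, also drawn from its private randomness.\<close>

lemma two_round_protocol:
  fixes q :: "('x \<times> 'x \<times> 'y1 \<times> 'y2) pmf" and px :: "'x pmf" and \<kappa> :: "'x \<Rightarrow> 'v pmf"
    and W1 :: "'x \<Rightarrow> 'v \<Rightarrow> 'y1 pmf" and W2 :: "'x \<Rightarrow> 'v \<Rightarrow> 'y2 pmf" and cb :: "'x list \<Rightarrow> 'v list list"
  assumes qx: "map_pmf (\<lambda>(a, b, c, d). (a, b)) q = map_pmf (\<lambda>x. (x, x)) px"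
    and fin_px: "finite (set_pmf px)" and fin_\<kappa>: "\<And>x. x \<in> set_pmf px \<Longrightarrow> finite (set_pmf (\<kappa> x))"
    and K1: "K1 > 0" and K2: "K2 > 0"
    and cb: "\<And>xs k. xs \<in> set_pmf (iid_pmf n px) \<Longrightarrow> k < K1 * K2 \<Longrightarrow> cb xs ! k \<in> set_pmf (Pi_list_pmf (map \<kappa> xs))"
  shows "\<exists>(P1::nat pmf) (P2::nat pmf) (e1::nat \<Rightarrow> 'x list \<Rightarrow> nat \<Rightarrow> nat list \<Rightarrow> nat)
        (e2::nat \<Rightarrow> 'x list \<Rightarrow> nat \<Rightarrow> nat list \<Rightarrow> nat)
        (d1::'x list \<Rightarrow> nat \<Rightarrow> nat list \<Rightarrow> 'y1 list) (d2::'x list \<Rightarrow> nat \<Rightarrow> nat list \<Rightarrow> 'y2 list).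
      let J = code_space n q P1 P2;
          C = (\<lambda>(xs, m1, m2). messages e1 e2 (map fst xs) (map snd xs) m1 m2 2);
          msg_law = (\<lambda>i. map_pmf (\<lambda>w. C w ! (i - 1)) J)
      in msg_law 1 = pmf_of_set {..<K1} \<and> msg_law 2 = pmf_of_set {..<K2}
       \<and> map_pmf (\<lambda>(xs, m1, m2). (map fst xs, map snd xs,
                  d1 (map fst xs) m1 (C (xs, m1, m2)), d2 (map snd xs) m2 (C (xs, m1, m2)))) J
         = map_pmf (\<lambda>(xs, ws). (xs, xs, map fst ws, map snd ws))
             (bind_pmf (iid_pmf n px) (\<lambda>xs. map_pmf (Pair xs) (bind_pmf (pmf_of_set {..<K1 * K2})
               (\<lambda>k. memoryless_channel (\<lambda>x f. pair_pmf (W1 x f) (W2 x f)) xs (cb xs ! k)))))"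
proof -
  define S where "S = Sigma (set_pmf px) (\<lambda>x. set_pmf (\<kappa> x))"
  define T1 where "T1 = iid_pmf n (Pi_pmf S undefined (\<lambda>(x, f). W1 x f))"
  define T2 where "T2 = iid_pmf n (Pi_pmf S undefined (\<lambda>(x, f). W2 x f))"
  obtain P1 :: "nat pmf" and dec1 where P1: "map_pmf dec1 P1 = pair_pmf (pmf_of_set {..<K1}) T1"
    using exists_nat_pmf_encoding by blast
  obtain P2 :: "nat pmf" and dec2 where P2: "map_pmf dec2 P2 = pair_pmf (pmf_of_set {..<K2}) T2"
    using exists_nat_pmf_encoding by blast
  define e1 :: "nat \<Rightarrow> 'x list \<Rightarrow> nat \<Rightarrow> nat list \<Rightarrow> nat" where "e1 i xs m c = fst (dec1 m)" for i xs m c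
  define e2 :: "nat \<Rightarrow> 'x list \<Rightarrow> nat \<Rightarrow> nat list \<Rightarrow> nat" where "e2 i xs m c = fst (dec2 m)" for i xs m c
  define d1 :: "'x list \<Rightarrow> nat \<Rightarrow> nat list \<Rightarrow> 'y1 list"
    where "d1 xs m c = map2 (\<lambda>h z. h z) (snd (dec1 m)) (zip xs (cb xs ! (c ! 0 * K2 + c ! 1)))" for xs m c
  define d2 :: "'x list \<Rightarrow> nat \<Rightarrow> nat list \<Rightarrow> 'y2 list"
    where "d2 xs m c = map2 (\<lambda>h z. h z) (snd (dec2 m)) (zip xs (cb xs ! (c ! 0 * K2 + c ! 1)))" for xs m c
  have C: "messages e1 e2 xs1 xs2 m1 m2 2 = [fst (dec1 m1), fst (dec2 m2)]" for xs1 xs2 m1 m2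
    by (simp add: numeral_2_eq_2 e1_def e2_def)
  note diagonal = map_pmf_code_space_diagonal[OF qx P1 P2]
  have laws: "map_pmf (\<lambda>w. (\<lambda>(xs, m1, m2). messages e1 e2 (map fst xs) (map snd xs) m1 m2 2) w ! (1 - 1))
      (code_space n q P1 P2) = pmf_of_set {..<K1}"
    "map_pmf (\<lambda>w. (\<lambda>(xs, m1, m2). messages e1 e2 (map fst xs) (map snd xs) m1 m2 2) w ! (2 - 1))
      (code_space n q P1 P2) = pmf_of_set {..<K2}"
    using diagonal[where G="\<lambda>_ _ a b. fst a"] diagonal[where G="\<lambda>_ _ a b. fst b"]
    by (simp_all add: C split_def bind_return_pmf' map_pmf_def[symmetric] map_fst_pair_pmf)
  have out: "map_pmf (\<lambda>(xs, m1, m2). (map fst xs, map snd xs,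
        d1 (map fst xs) m1 (messages e1 e2 (map fst xs) (map snd xs) m1 m2 2),
        d2 (map snd xs) m2 (messages e1 e2 (map fst xs) (map snd xs) m1 m2 2))) (code_space n q P1 P2)
      = map_pmf (\<lambda>(xs, ws). (xs, xs, map fst ws, map snd ws)) (bind_pmf (iid_pmf n px) (\<lambda>xs. map_pmf (Pair xs)
        (bind_pmf (pmf_of_set {..<K1 * K2}) (\<lambda>k. memoryless_channel (\<lambda>x f. pair_pmf (W1 x f) (W2 x f)) xs (cb xs ! k)))))"
    using diagonal[where G="\<lambda>xs1 xs2 a b. (xs1, xs2,
        map2 (\<lambda>h z. h z) (snd a) (zip xs1 (cb xs1 ! (fst a * K2 + fst b))),
        map2 (\<lambda>h z. h z) (snd b) (zip xs2 (cb xs2 ! (fst a * K2 + fst b))))"]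
      random_tables_output_law[where px=px and \<kappa>=\<kappa> and n=n and cb=cb and ?W1.0=W1 and ?W2.0=W2, OF fin_px fin_\<kappa> K1 K2 cb, folded S_def T1_def T2_def]
    by (simp add: C d1_def d2_def case_prod_beta)
  show ?thesis
    unfolding Let_def
    apply (rule exI[of _ P1], rule exI[of _ P2], rule exI[of _ e1], rule exI[of _ e2],
        rule exI[of _ d1], rule exI[of _ d2])
    using out by (intro conjI laws) simp
qed

lemma iid_pmf_diagonal_source:
  assumes "q = map_pmf (\<lambda>(x, f, w). (x, x, fst w, snd w)) (joint_pmf px \<kappa> W)"
  shows "map_pmf (\<lambda>zs. (map (\<lambda>(a,b,c,d). a) zs, map (\<lambda>(a,b,c,d). b) zs, map (\<lambda>(a,b,c,d). c) zs, map (\<lambda>(a,b,c,d). d) zs))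
      (iid_pmf n q)
    = map_pmf (\<lambda>(xs, ws). (xs, xs, map fst ws, map snd ws))
        (bind_pmf (iid_pmf n px) (\<lambda>xs. map_pmf (Pair xs) (Pi_list_pmf (map (\<lambda>x. bind_pmf (\<kappa> x) (W x)) xs))))"
proof -
  have "q = map_pmf (\<lambda>(x, w). (x, x, fst w, snd w)) (bind_pmf px (\<lambda>x. map_pmf (Pair x) (bind_pmf (\<kappa> x) (W x))))"
    unfolding assms joint_pmf_def by (simp add: map_bind_pmf bind_map_pmf pmf.map_comp o_def)
  then have "iid_pmf n q = map_pmf (map (\<lambda>(x, w). (x, x, fst w, snd w)))
      (bind_pmf (iid_pmf n px) (\<lambda>xs. map_pmf (zip xs) (Pi_list_pmf (map (\<lambda>x. bind_pmf (\<kappa> x) (W x)) xs))))"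
    by (simp add: iid_pmf_map iid_pmf_bind Pi_list_pmf_map_Pair)
  also have "\<dots> = bind_pmf (iid_pmf n px) (\<lambda>xs. map_pmf (\<lambda>ws. map (\<lambda>(x, w). (x, x, fst w, snd w)) (zip xs ws))
      (Pi_list_pmf (map (\<lambda>x. bind_pmf (\<kappa> x) (W x)) xs)))"
    by (simp add: map_bind_pmf pmf.map_comp o_def)
  finally have iid: "iid_pmf n q = \<dots>" .
  have proj: "(map (\<lambda>(a,b,c,d). a) zs, map (\<lambda>(a,b,c,d). b) zs, map (\<lambda>(a,b,c,d). c) zs, map (\<lambda>(a,b,c,d). d) zs)
      = (xs, xs, map fst ws, map snd ws)"
    if "zs = map (\<lambda>(x, w). (x, x, fst w, snd w)) (zip xs ws)" "length ws = length xs" for xs ws zs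
    using that by (induction xs arbitrary: ws zs) (auto simp: length_Suc_conv)
  show ?thesis
    unfolding iid map_bind_pmf pmf.map_comp
  proof (intro bind_pmf_cong refl map_pmf_cong)
    fix xs ws assume "ws \<in> set_pmf (Pi_list_pmf (map (\<lambda>x. bind_pmf (\<kappa> x) (W x)) xs))"
    then have "length ws = length xs" by (simp add: length_of_set_Pi_list_pmf)
    then show "((\<lambda>zs. (map (\<lambda>(a,b,c,d). a) zs, map (\<lambda>(a,b,c,d). b) zs, map (\<lambda>(a,b,c,d). c) zs, map (\<lambda>(a,b,c,d). d) zs))
        \<circ> (\<lambda>ws. map (\<lambda>(x, w). (x, x, fst w, snd w)) (zip xs ws))) ws
      = ((\<lambda>(xs, ws). (xs, xs, map fst ws, map snd ws)) \<circ> Pair xs) ws"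
      unfolding o_def prod.case by (rule proj[OF refl])
  qed
qed

lemma entropy_pmf_of_set_lessThan:
  assumes "K > 0"
  shows "entropy_pmf (pmf_of_set {..<(K::nat)}) = ennreal (log 2 K)"
proof -
  have "{..<K} \<noteq> {}" using assms by auto
  then have "entropy_pmf (pmf_of_set {..<K}) = (\<integral>\<^sup>+ x. ennreal (log 2 K / K) * indicator {..<K} x \<partial>count_space UNIV)"
    unfolding entropy_pmf_def using assms by (intro nn_integral_cong) (auto simp: indicator_def log_divide)
  also have "\<dots> = ennreal (log 2 K / K) * ennreal (real K)"
    by (simp add: nn_integral_count_space_indicator[symmetric] nn_integral_count_space_finite
        ennreal_of_nat_eq_real_of_nat)
  also have "\<dots> = ennreal (log 2 K)"
    using assms by (simp add: ennreal_mult[symmetric])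
  finally show ?thesis .
qed

lemma two_round_code_exists:
  fixes q :: "('x::finite \<times> 'x \<times> 'y1::finite \<times> 'y2::finite) pmf" and px :: "'x pmf" and \<kappa> :: "'x \<Rightarrow> 'v pmf"
    and W1 :: "'x \<Rightarrow> 'v \<Rightarrow> 'y1 pmf" and W2 :: "'x \<Rightarrow> 'v \<Rightarrow> 'y2 pmf" and K1 K2 :: nat
  defines "W \<equiv> \<lambda>x f. pair_pmf (W1 x f) (W2 x f)"
  assumes q: "q = map_pmf (\<lambda>(x, f, w). (x, x, fst w, snd w)) (joint_pmf px \<kappa> W)"
    and fin_px: "finite (set_pmf px)" and fin_\<kappa>: "\<And>x. x \<in> set_pmf px \<Longrightarrow> finite (set_pmf (\<kappa> x))"
    and K1: "K1 > 0" "log 2 K1 \<le> n * R12" and K2: "K2 > 0" "log 2 K2 \<le> n * R21" and t: "t > 0"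
    and err: "sqrt (t / (K1 * K2)) + 2 * measure_pmf.prob (iid_pmf n (joint_pmf px \<kappa> W))
           {zs. log 2 t < (\<Sum>z\<leftarrow>zs. info_density \<kappa> W z)} \<le> \<epsilon>"
  shows "code_exists 2 q R12 R21 n \<epsilon>"
proof -
  have fin_W: "finite (set_pmf (W x f))" for x f by (rule finite_subset[OF subset_UNIV]) simp
  have qx: "map_pmf (\<lambda>(a, b, c, d). (a, b)) q = map_pmf (\<lambda>x. (x, x)) px"
    using arg_cong[OF map_fst_joint_pmf, of "map_pmf (\<lambda>x. (x, x))" px \<kappa> W]
    unfolding q by (simp add: pmf.map_comp o_def case_prod_beta)
  obtain cb where cb: "\<forall>xs\<in>set_pmf (iid_pmf n px). \<forall>k<K1 * K2. cb xs ! k \<in> set_pmf (Pi_list_pmf (map \<kappa> xs))"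
    and tv: "tv_dist (bind_pmf (iid_pmf n px) (\<lambda>xs. map_pmf (Pair xs)
               (bind_pmf (pmf_of_set {..<K1 * K2}) (\<lambda>k. memoryless_channel W xs (cb xs ! k)))))
            (bind_pmf (iid_pmf n px) (\<lambda>xs. map_pmf (Pair xs) (Pi_list_pmf (map (\<lambda>x. bind_pmf (\<kappa> x) (W x)) xs))))
      \<le> ennreal (sqrt (t / (K1 * K2)) + 2 * measure_pmf.prob (iid_pmf n (joint_pmf px \<kappa> W))
           {zs. log 2 t < (\<Sum>z\<leftarrow>zs. info_density \<kappa> W z)})"
    using exists_codebook[where px=px and \<kappa>=\<kappa> and W=W and K="K1 * K2" and t=t and n=n, OF fin_px fin_\<kappa> fin_W]
      K1 K2 t by auto
  define A where "A = bind_pmf (iid_pmf n px) (\<lambda>xs. map_pmf (Pair xs)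
    (bind_pmf (pmf_of_set {..<K1 * K2}) (\<lambda>k. memoryless_channel W xs (cb xs ! k))))"
  define B where "B = bind_pmf (iid_pmf n px) (\<lambda>xs. map_pmf (Pair xs) (Pi_list_pmf (map (\<lambda>x. bind_pmf (\<kappa> x) (W x)) xs)))"
  have "finite (set_pmf A)"
    unfolding A_def by (rule finite_set_pmf_bounded_lists[where n=n])
      (auto dest!: length_of_set_iid_pmf length_of_set_memoryless_channel)
  moreover have "finite (set_pmf B)"
    unfolding B_def by (rule finite_set_pmf_bounded_lists[where n=n])
      (auto dest!: length_of_set_iid_pmf length_of_set_Pi_list_pmf)
  ultimately have "tv_dist (map_pmf (\<lambda>(xs, ws). (xs, xs, map fst ws, map snd ws)) A)
      (map_pmf (\<lambda>(xs, ws). (xs, xs, map fst ws, map snd ws)) B) \<le> tv_dist A B"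
    by (rule tv_dist_map_pmf_le)
  also have "\<dots> \<le> ennreal \<epsilon>"
    using tv ennreal_leI[OF err] unfolding A_def[symmetric] B_def[symmetric] by (rule order.trans)
  finally have tv_AB: "tv_dist (map_pmf (\<lambda>(xs, ws). (xs, xs, map fst ws, map snd ws)) A)
      (map_pmf (\<lambda>(xs, ws). (xs, xs, map fst ws, map snd ws)) B) \<le> ennreal \<epsilon>" .
  have odd_even: "{i\<in>{1..2::nat}. odd i} = {1}" "{i\<in>{1..2::nat}. even i} = {2}"
    by (auto simp: le_Suc_eq numeral_2_eq_2)
  from cb have "cb xs ! k \<in> set_pmf (Pi_list_pmf (map \<kappa> xs))"
    if "xs \<in> set_pmf (iid_pmf n px)" "k < K1 * K2" for xs k
    using that by blast
  from two_round_protocol[where ?W1.0=W1 and ?W2.0=W2 and n=n and cb=cb, OF qx fin_px fin_\<kappa> K1(1) K2(1) this]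
  obtain P1 P2 e1 e2 d1 d2 where protocol: "let J = code_space n q P1 P2;
          C = (\<lambda>(xs, m1, m2). messages e1 e2 (map fst xs) (map snd xs) m1 m2 2);
          msg_law = (\<lambda>i. map_pmf (\<lambda>w. C w ! (i - 1)) J)
      in msg_law 1 = pmf_of_set {..<K1} \<and> msg_law 2 = pmf_of_set {..<K2}
       \<and> map_pmf (\<lambda>(xs, m1, m2). (map fst xs, map snd xs,
                  d1 (map fst xs) m1 (C (xs, m1, m2)), d2 (map snd xs) m2 (C (xs, m1, m2)))) J
         = map_pmf (\<lambda>(xs, ws). (xs, xs, map fst ws, map snd ws)) A"
    unfolding A_def W_def by blast
  show ?thesis
    unfolding code_exists_def Let_def odd_even
    apply (rule exI[of _ P1], rule exI[of _ P2], rule exI[of _ e1], rule exI[of _ e2],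
        rule exI[of _ d1], rule exI[of _ d2])
    using protocol[unfolded Let_def] tv_AB K1 K2
    by (simp add: entropy_pmf_of_set_lessThan iid_pmf_diagonal_source[OF q] B_def[symmetric] ennreal_leI)
qed

section \<open>Achievability\<close>

lemma admissibleI_inverse_blocklength:
  assumes "\<And>n \<epsilon>. n \<ge> 1 \<Longrightarrow> c / n \<le> \<epsilon> \<Longrightarrow> code_exists r q R12 R21 n \<epsilon>"
  shows "admissible r q R12 R21"
  unfolding admissible_iff_code_exists
proof (intro allI impI)
  fix \<epsilon> :: real assume \<epsilon>: "\<epsilon> > 0"
  have "code_exists r q R12 R21 n \<epsilon>" if n: "nat \<lceil>c / \<epsilon>\<rceil> + 1 \<le> n" for n
  proof (rule assms)
    show "n \<ge> 1" using n by simp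
    have "c / \<epsilon> \<le> real n" using n by linarith
    then show "c / n \<le> \<epsilon>" using n \<epsilon> by (simp add: divide_le_eq mult.commute)
  qed
  then show "\<exists>n0. \<forall>n\<ge>n0. code_exists r q R12 R21 n \<epsilon>" by blast
qed

lemma exists_message_size:
  fixes a :: real
  assumes "a \<ge> 0"
  shows "\<exists>K::nat. K > (0::nat) \<and> log 2 K \<le> a \<and> 2 powr a \<le> 2 * K"
proof -
  define K where "K = nat \<lfloor>2 powr a\<rfloor>"
  have y: "2 powr a \<ge> 1" using assms by (intro ge_one_powr_ge_zero) auto
  then have "real K = of_int \<lfloor>2 powr a\<rfloor>" "of_int \<lfloor>2 powr a\<rfloor> > 2 powr a - 1" "\<lfloor>2 powr a\<rfloor> \<ge> 1"
    unfolding K_def by linarith+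
  then have "K > 0" "real K \<le> 2 powr a" "2 powr a \<le> 2 * real K" by linarith+
  moreover have "log 2 K \<le> a"
    using \<open>K > 0\<close> \<open>real K \<le> 2 powr a\<close> by (simp add: log_le_iff le_log_iff)
  ultimately show ?thesis by (intro exI[of _ K]) simp
qed

lemma sqrt_powr_div_le:
  fixes x y K :: real
  assumes x: "x > 0" and K: "K > 0" and le: "2 powr (y + 2 * x) \<le> 4 * K"
  shows "sqrt (2 powr y / K) \<le> 2 / (x * ln 2)"
proof -
  have "2 powr (y + 2 * x) / 4 \<le> K" using le by simp
  then have "2 powr y / K \<le> 2 powr y / (2 powr (y + 2 * x) / 4)"
    using K by (intro divide_left_mono) auto
  also have "\<dots> = 4 * (2 powr y / 2 powr (y + 2 * x))" by simp
  also have "\<dots> = 4 * 2 powr (y - (y + 2 * x))"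
    by (simp only: powr_diff)
  also have "y - (y + 2 * x) = - x + - x" by simp
  also have "4 * 2 powr (- x + - x) = (2 * 2 powr (- x))\<^sup>2"
    by (simp only: powr_add) (simp add: power2_eq_square)
  finally have "sqrt (2 powr y / K) \<le> sqrt ((2 * 2 powr (- x))\<^sup>2)"
    by (rule real_sqrt_le_mono)
  also have "\<dots> = 2 * 2 powr (- x)" by (simp only: real_sqrt_abs) simp
  also have "\<dots> \<le> 2 * (1 / (x * ln 2))"
  proof -
    have "x * ln 2 \<le> exp (x * ln 2)" using exp_ge_add_one_self[of "x * ln 2"] by linarith
    then have "x * ln 2 \<le> 2 powr x" by (simp add: powr_def mult.commute)
    then show ?thesis using x by (simp add: powr_minus_divide divide_left_mono)
  qed
  finally show ?thesis by simp
qed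

lemma simulation_error_le:
  fixes T :: "'a pmf" and g :: "'a \<Rightarrow> real" and K1 K2 n :: nat
  assumes fin_T: "finite (set_pmf T)" and \<delta>: "\<delta> > 0" and n: "n \<ge> 1" and K: "K1 > 0" "K2 > 0"
    and le: "2 powr (n * (measure_pmf.expectation T g + 3 * \<delta>)) \<le> 4 * (K1 * K2)"
  defines "t \<equiv> 2 powr (n * (measure_pmf.expectation T g + \<delta>))"
  shows "sqrt (t / (K1 * K2)) + 2 * measure_pmf.prob (iid_pmf n T) {zs. log 2 t < (\<Sum>z\<leftarrow>zs. g z)}
    \<le> (2 / (\<delta> * ln 2) + 2 * measure_pmf.expectation T (\<lambda>z. (g z - measure_pmf.expectation T g)\<^sup>2) / \<delta>\<^sup>2) / n"
proof -
  let ?I = "measure_pmf.expectation T g" and ?V = "measure_pmf.expectation T (\<lambda>z. (g z - measure_pmf.expectation T g)\<^sup>2)"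
  have "n * (?I + \<delta>) + 2 * (n * \<delta>) = n * (?I + 3 * \<delta>)" by (simp add: algebra_simps)
  then have "sqrt (t / (K1 * K2)) \<le> 2 / (n * \<delta> * ln 2)"
    unfolding t_def using n \<delta> K le by (intro sqrt_powr_div_le) auto
  moreover have "measure_pmf.prob (iid_pmf n T) {zs. log 2 t < (\<Sum>z\<leftarrow>zs. g z)}
      \<le> measure_pmf.prob (iid_pmf n T) {zs. (\<Sum>z\<leftarrow>zs. g z) \<ge> n * (?I + \<delta>)}"
    by (intro measure_pmf.finite_measure_mono) (auto simp: t_def)
  moreover have "\<dots> \<le> ?V / (n * \<delta>\<^sup>2)"
    using prob_iid_sum_list_ge[OF fin_T \<delta>, of n g] n by simp
  ultimately have "sqrt (t / (K1 * K2)) + 2 * measure_pmf.prob (iid_pmf n T) {zs. log 2 t < (\<Sum>z\<leftarrow>zs. g z)}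
      \<le> 2 / (n * \<delta> * ln 2) + 2 * (?V / (n * \<delta>\<^sup>2))"
    by linarith
  also have "\<dots> = (2 / (\<delta> * ln 2) + 2 * ?V / \<delta>\<^sup>2) / n"
    using n \<delta> by (simp add: field_simps)
  finally show ?thesis .
qed

text \<open>The error at blocklength n is O(1/n): the soft-covering term decays exponentially in n,
  and Chebyshev's inequality bounds the probability of a large information density.\<close>

lemma admissible_of_expectation_info_density_less:
  fixes q :: "('x::finite \<times> 'x \<times> 'y1::finite \<times> 'y2::finite) pmf" and px :: "'x pmf" and \<kappa> :: "'x \<Rightarrow> 'v pmf"
    and W1 :: "'x \<Rightarrow> 'v \<Rightarrow> 'y1 pmf" and W2 :: "'x \<Rightarrow> 'v \<Rightarrow> 'y2 pmf"
  defines "W \<equiv> \<lambda>x f. pair_pmf (W1 x f) (W2 x f)"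
  assumes q: "q = map_pmf (\<lambda>(x, f, w). (x, x, fst w, snd w)) (joint_pmf px \<kappa> W)"
    and fin_px: "finite (set_pmf px)" and fin_\<kappa>: "\<And>x. x \<in> set_pmf px \<Longrightarrow> finite (set_pmf (\<kappa> x))"
    and R: "R12 \<ge> 0" "R21 \<ge> 0"
    and less: "measure_pmf.expectation (joint_pmf px \<kappa> W) (info_density \<kappa> W) < R12 + R21"
  shows "admissible 2 q R12 R21"
proof -
  define T where "T = joint_pmf px \<kappa> W"
  define I where "I = measure_pmf.expectation T (info_density \<kappa> W)"
  define \<delta> where "\<delta> = (R12 + R21 - I) / 3"
  have \<delta>: "\<delta> > 0" using less by (simp add: \<delta>_def I_def T_def)
  have fin_T: "finite (set_pmf T)"
    using fin_px fin_\<kappa> by (auto simp: T_def joint_pmf_def intro!: finite_subset[OF subset_UNIV])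
  show ?thesis
  proof (rule admissibleI_inverse_blocklength)
    fix n :: nat and \<epsilon> :: real
    assume n: "n \<ge> 1" and \<epsilon>: "(2 / (\<delta> * ln 2) + 2 * measure_pmf.expectation T
      (\<lambda>z. (info_density \<kappa> W z - I)\<^sup>2) / \<delta>\<^sup>2) / n \<le> \<epsilon>"
    obtain K1 :: nat where K1: "K1 > 0" "log 2 K1 \<le> n * R12" "2 powr (n * R12) \<le> 2 * K1"
      using exists_message_size[of "n * R12"] R by auto
    obtain K2 :: nat where K2: "K2 > 0" "log 2 K2 \<le> n * R21" "2 powr (n * R21) \<le> 2 * K2"
      using exists_message_size[of "n * R21"] R by auto
    have "n * (I + 3 * \<delta>) = n * R12 + n * R21" by (simp add: \<delta>_def field_simps)
    then have "2 powr (n * (I + 3 * \<delta>)) \<le> 4 * (K1 * K2)"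
      using mult_mono[OF K1(3) K2(3)] by (simp add: powr_add)
    from simulation_error_le[OF fin_T \<delta> n K1(1) K2(1) this[unfolded I_def]] \<epsilon>
    have "sqrt (2 powr (n * (I + \<delta>)) / (K1 * K2)) + 2 * measure_pmf.prob (iid_pmf n T)
        {zs. log 2 (2 powr (n * (I + \<delta>))) < (\<Sum>z\<leftarrow>zs. info_density \<kappa> W z)} \<le> \<epsilon>"
      unfolding I_def by linarith
    then show "code_exists 2 q R12 R21 n \<epsilon>"
      unfolding T_def W_def
      by (intro two_round_code_exists[where t="2 powr (n * (I + \<delta>))", OF q[unfolded W_def] fin_px fin_\<kappa> K1(1,2) K2(1,2)])
        auto
  qed
qed

lemma admissible_of_cond_mutual_info_less:
  fixes q :: "('x::finite \<times> 'x \<times> 'y1::finite \<times> 'y2::finite) pmf" and P :: "('x \<times> 'y1 \<times> 'y2 \<times> 'f) pmf"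
  assumes diagonal: "\<forall>(a, b, c, d)\<in>set_pmf q. a = b" and fin_P: "finite (set_pmf P)"
    and marginal: "map_pmf (\<lambda>(x, y1, y2, F). (x, y1, y2)) P = map_pmf (\<lambda>(a, b, c, d). (a, c, d)) q"
    and mc: "markov_chain P (\<lambda>(x, y1, y2, F). y1) (\<lambda>(x, y1, y2, F). (F, x)) (\<lambda>(x, y1, y2, F). y2)"
    and R: "R12 \<ge> 0" "R21 \<ge> 0"
    and less: "cond_mutual_info P (\<lambda>(x, y1, y2, F). (y1, y2)) (\<lambda>(x, y1, y2, F). F) (\<lambda>(x, y1, y2, F). x) < R12 + R21"
  shows "admissible 2 q R12 R21"
proof -
  define T where "T = map_pmf (\<lambda>(x, y1, y2, F). (x, F, (y1, y2))) P"
  define W1 where "W1 x v = map_pmf fst (cond_last_pmf T x v)" for x v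
  define W2 where "W2 x v = map_pmf snd (cond_last_pmf T x v)" for x v
  have fin_T: "finite (set_pmf T)" using fin_P by (simp add: T_def)
  have "markov_chain P (\<lambda>(x, y1, y2, F). y1) (prod.swap \<circ> (\<lambda>(x, y1, y2, F). (F, x))) (\<lambda>(x, y1, y2, F). y2)"
    using mc by (rule markov_chain_inj_middle) simp
  then have "markov_chain (map_pmf (\<lambda>(x, v, w). ((x, v), w)) T) (\<lambda>z. fst (snd z)) fst (\<lambda>z. snd (snd z))"
    unfolding T_def pmf.map_comp markov_chain_map_pmf by (simp add: o_def split_def)
  note decomposition = markov_chain_product_kernel[OF this, folded W1_def W2_def]
  have "q = map_pmf (\<lambda>(a, c, d). (a, a, c, d)) (map_pmf (\<lambda>(a, b, c, d). (a, c, d)) q)"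
    unfolding pmf.map_comp using diagonal by (subst map_pmf_cong[where g=id]) auto
  then have q: "q = map_pmf (\<lambda>(x, f, w). (x, x, fst w, snd w))
      (joint_pmf (map_pmf fst T) (cond_mid_pmf T) (\<lambda>x v. pair_pmf (W1 x v) (W2 x v)))"
    unfolding decomposition marginal[symmetric] by (simp add: T_def pmf.map_comp o_def case_prod_beta)
  have "map_pmf (\<lambda>s. ((\<lambda>(x, y1, y2, F). x) s, (\<lambda>(x, y1, y2, F). F) s, (\<lambda>(x, y1, y2, F). (y1, y2)) s)) P = T"
    unfolding T_def by (intro map_pmf_cong) auto
  then have cmi: "cond_mutual_info P (\<lambda>(x, y1, y2, F). (y1, y2)) (\<lambda>(x, y1, y2, F). F) (\<lambda>(x, y1, y2, F). x)
      = measure_pmf.expectation T (info_density (cond_mid_pmf T) (cond_last_pmf T))"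
    by (simp add: cond_mutual_info_eq_expectation_info_density[OF fin_P])
  show ?thesis
  proof (rule admissible_of_expectation_info_density_less[OF q _ _ R])
    show "finite (set_pmf (map_pmf fst T))" using fin_T by simp
    show "finite (set_pmf (cond_mid_pmf T x))" if "x \<in> set_pmf (map_pmf fst T)" for x
      using that fin_T by (simp add: set_cond_mid_pmf) (rule finite_subset[of _ "fst ` snd ` set_pmf T"]; force)
    show "measure_pmf.expectation (joint_pmf (map_pmf fst T) (cond_mid_pmf T) (\<lambda>x v. pair_pmf (W1 x v) (W2 x v)))
        (info_density (cond_mid_pmf T) (\<lambda>x v. pair_pmf (W1 x v) (W2 x v))) < R12 + R21"
      using less by (simp add: decomposition cmi)
  qed
qed

theorem theorem4:
  fixes q :: "('x::finite \<times> 'x \<times> 'y1::finite \<times> 'y2::finite) pmf"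
    and P :: "('x \<times> 'y1 \<times> 'y2 \<times> 'f::finite list) pmf"
    and r :: nat and R :: "nat \<Rightarrow> real"
  assumes "\<forall>(a, b, c, d)\<in>set_pmf q. a = b"
    and "r \<ge> 1"
    and "\<forall>(x, y1, y2, F)\<in>set_pmf P. length F = r"
    and "map_pmf (\<lambda>(x, y1, y2, F). (x, y1, y2)) P = map_pmf (\<lambda>(a, b, c, d). (a, c, d)) q"
    and "markov_chain P (\<lambda>(x, y1, y2, F). y1) (\<lambda>(x, y1, y2, F). (F, x)) (\<lambda>(x, y1, y2, F). y2)"
    and "\<forall>i\<in>{1..r}. R i > 0"
    and "\<forall>s\<in>{1..r}. (\<Sum>i=1..s. R i) >
           cond_mutual_info P (\<lambda>(x, y1, y2, F). (y1, y2)) (\<lambda>(x, y1, y2, F). take s F) (\<lambda>(x, y1, y2, F). x)"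
  shows "admissible 2 q (\<Sum>i\<in>{i\<in>{1..r}. odd i}. R i) (\<Sum>i\<in>{i\<in>{1..r}. even i}. R i)"
proof -
  have fin_P: "finite (set_pmf P)"
  proof (rule finite_subset)
    show "set_pmf P \<subseteq> UNIV \<times> UNIV \<times> UNIV \<times> {F. set F \<subseteq> UNIV \<and> length F = r}"
      using assms(3) by auto
  qed (intro finite_cartesian_product finite_lists_length_eq; simp)
  have "cond_mutual_info P (\<lambda>(x, y1, y2, F). (y1, y2)) (\<lambda>(x, y1, y2, F). F) (\<lambda>(x, y1, y2, F). x)
      < (\<Sum>i=1..r. R i)"
    using bspec[OF assms(7), of r] assms(2,3) by (subst cond_mutual_info_cong[where fb'="\<lambda>(x, y1, y2, F). take r F"]) auto
  also have "\<dots> = (\<Sum>i\<in>{i\<in>{1..r}. odd i}. R i) + (\<Sum>i\<in>{i\<in>{1..r}. even i}. R i)"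
    by (subst sum.union_disjoint[symmetric]) (auto intro: sum.cong)
  finally have less: "cond_mutual_info P (\<lambda>(x, y1, y2, F). (y1, y2)) (\<lambda>(x, y1, y2, F). F) (\<lambda>(x, y1, y2, F). x)
      < (\<Sum>i\<in>{i\<in>{1..r}. odd i}. R i) + (\<Sum>i\<in>{i\<in>{1..r}. even i}. R i)" .
  have "R i \<ge> 0" if "i \<in> {1..r}" for i using assms(6) that by fastforce
  then have "0 \<le> (\<Sum>i\<in>{i\<in>{1..r}. odd i}. R i)" "0 \<le> (\<Sum>i\<in>{i\<in>{1..r}. even i}. R i)"
    by (intro sum_nonneg; simp)+
  with assms(1,4,5) fin_P less show ?thesis by (intro admissible_of_cond_mutual_info_less)
qed

end
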